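(* In the setting of the context, suppose the family $\{a_{v,\sigma}\}_{v\in\mathcal{V}_L^W}$ is connected (in the sense defined in the context). Let $U>0$, $H=H_{\mathrm{hop}}+U\sum_{v\in\mathcal{V}_L}n_{v,\uparrow}n_{v,\downarrow}$, and $N_e=|\mathcal{V}_L^W|$. Then the ground-state energy of $H$ is $0$ and every ground state of $H$ is a linear combination of $\Phi_\uparrow=\big(\prod_{v\in\mathcal{V}_L^W}a^\dagger_{v,\uparrow}\big)\Phi_0$ and its $SU(2)$ spin rotations.
   Context: Construction. Let $G_l=(V_l,E_l)$, $l=1,\dots,L$, be complete graphs with $|V_l|\ge 2$. In each $V_l$ one vertex $v_l^0$ is painted black, the others white. Set $\mathcal{G}_1=G_1$. For $l=2,\dots,L$: choose an integer $z_l$ with $0<z_l\le |V_l|-1$, choose $z_l$ white vertices of $V_l$ and identify each with a vertex (black or white; distinct with distinct) of $\mathcal{V}_{l-1}$; $\mathcal{V}_l=\mathcal{V}_{l-1}\cup V_l$ with these identifications and $\mathcal{E}_l=\mathcal{E}_{l-1}\cup E_l$. A white vertex identified with a black one becomes black; two identified white vertices stay white; $v_l^0$ is never identified with an earlier vertex. $\mathcal{V}_L^W$ denotes the set of white vertices; $V_l$ is regarded as a subset of $\mathcal{V}_L$. Directed edges: $\vec{\mathcal{E}}_L=\bigcup_l\{(v,v_l^0):v\in V_l\setminus\{v_l^0\}\}$; directed paths (including the trivial path $(v)$), reachable set $R(v)$, number $N(v\to u)$ of directed paths from $v$ to $u$, $|(v\to u)_j|$ the number of vertices on the $j$-th path.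 Fermions $c_{v,\sigma}$ with canonical anticommutation relations, vacuum $\Phi_0$, $n_{v,\sigma}=c^\dagger_{v,\sigma}c_{v,\sigma}$; $b_{l,\sigma}=\sum_{v\in V_l}c_{v,\sigma}$, $H_{\mathrm{hop}}=t\sum_{l}\sum_\sigma b^\dagger_{l,\sigma}b_{l,\sigma}$, $t>0$. For white $v$, $a_{v,\sigma}=\sum_{u\in R(v)}\big(\sum_{j=1}^{N(v\to u)}(-1)^{|(v\to u)_j|-1}\big)c_{u,\sigma}$. Two operators $a_{v,\sigma},a_{v',\sigma}$ are directly connected if some vertex $u$ has $\{c^\dagger_{u,\sigma},a_{v,\sigma}\}\neq0$ and $\{c^\dagger_{u,\sigma},a_{v',\sigma}\}\ne0$; the family is connected if any two members are joined by a chain of directly connected members. *)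

theory Defs
  imports Complex_Main
begin

datatype spin = Up | Dn

type_synonym 'v mode = "'v \<times> spin"
(* a state assigns a complex amplitude to every occupation configuration (finite set of modes) *)
type_synonym 'v state = "'v mode set \<Rightarrow> complex"
type_synonym 'v oper = "'v state \<Rightarrow> 'v state"

(* fixed total order on modes used for the fermionic sign convention *)
definition mode_before :: "('v::linorder) mode \<Rightarrow> 'v mode \<Rightarrow> bool" where
  "mode_before x m \<longleftrightarrow> fst x < fst m \<or> (fst x = fst m \<and> snd x = Up \<and> snd m = Dn)"

definition fsign :: "('v::linorder) mode set \<Rightarrow> 'v mode \<Rightarrow> complex" where
  "fsign S m = (-1) ^ card {x\<in>S. mode_before x m}"

definition cdag :: "('v::linorder) mode \<Rightarrow> 'v oper" where
  "cdag m \<Psi> = (\<lambda>S. if m \<in> S then fsign (S - {m}) m * \<Psi> (S - {m}) else 0)"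

definition cann :: "('v::linorder) mode \<Rightarrow> 'v oper" where
  "cann m \<Psi> = (\<lambda>S. if m \<notin> S then fsign S m * \<Psi> (insert m S) else 0)"

definition numop :: "('v::linorder) mode \<Rightarrow> 'v oper" where
  "numop m \<Psi> = cdag m (cann m \<Psi>)"

definition vacuum :: "'v state" where
  "vacuum = (\<lambda>S. if S = {} then 1 else 0)"

definition zero_op :: "'v oper" where
  "zero_op = (\<lambda>\<Psi> S. 0)"

definition anticomm :: "'v oper \<Rightarrow> 'v oper \<Rightarrow> 'v oper" where
  "anticomm A B = (\<lambda>\<Psi> S. A (B \<Psi>) S + B (A \<Psi>) S)"

definition cspan :: "'v state set \<Rightarrow> 'v state set" where
  "cspan X = {\<Psi>. \<exists>F coef. finite F \<and> F \<subseteq> X \<and> \<Psi> = (\<lambda>S. \<Sum>x\<in>F. coef x * x S)}"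

(* states with exactly n electrons on the vertex set VV *)
definition sector :: "'v set \<Rightarrow> nat \<Rightarrow> 'v state set" where
  "sector VV n = {\<Psi>. \<forall>S. \<Psi> S \<noteq> 0 \<longrightarrow> S \<subseteq> VV \<times> UNIV \<and> card S = n}"

definition is_ground_energy :: "'v oper \<Rightarrow> 'v state set \<Rightarrow> real \<Rightarrow> bool" where
  "is_ground_energy H Sp E \<longleftrightarrow>
     (\<exists>\<Psi>\<in>Sp. \<Psi> \<noteq> (\<lambda>S. 0) \<and> H \<Psi> = (\<lambda>S. of_real E * \<Psi> S)) \<and>
     (\<forall>E' \<Psi>. \<Psi> \<in> Sp \<longrightarrow> \<Psi> \<noteq> (\<lambda>S. 0) \<longrightarrow> H \<Psi> = (\<lambda>S. of_real E' * \<Psi> S) \<longrightarrow> E \<le> E')"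

definition ground_states :: "'v oper \<Rightarrow> 'v state set \<Rightarrow> real \<Rightarrow> 'v state set" where
  "ground_states H Sp E = {\<Psi>\<in>Sp. \<Psi> \<noteq> (\<lambda>S. 0) \<and> H \<Psi> = (\<lambda>S. of_real E * \<Psi> S)}"

(* V l is V_l regarded as a subset of the final vertex set, v0 l is the black vertex v_l^0 *)
definition valid_construction :: "nat \<Rightarrow> (nat \<Rightarrow> 'v set) \<Rightarrow> (nat \<Rightarrow> 'v) \<Rightarrow> bool" where
  "valid_construction L V v0 \<longleftrightarrow>
     L \<ge> 1 \<and>
     (\<forall>l\<in>{1..L}. finite (V l) \<and> card (V l) \<ge> 2 \<and> v0 l \<in> V l) \<and>
     (\<forall>l\<in>{2..L}. V l \<inter> (\<Union>k\<in>{1..<l}. V k) \<noteq> {} \<and> v0 l \<notin> (\<Union>k\<in>{1..<l}. V k))"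

definition allV :: "nat \<Rightarrow> (nat \<Rightarrow> 'v set) \<Rightarrow> 'v set" where
  "allV L V = (\<Union>l\<in>{1..L}. V l)"

definition whiteV :: "nat \<Rightarrow> (nat \<Rightarrow> 'v set) \<Rightarrow> (nat \<Rightarrow> 'v) \<Rightarrow> 'v set" where
  "whiteV L V v0 = allV L V - v0 ` {1..L}"

definition dedge :: "nat \<Rightarrow> (nat \<Rightarrow> 'v set) \<Rightarrow> (nat \<Rightarrow> 'v) \<Rightarrow> 'v \<Rightarrow> 'v \<Rightarrow> bool" where
  "dedge L V v0 x y \<longleftrightarrow> (\<exists>l\<in>{1..L}. y = v0 l \<and> x \<in> V l \<and> x \<noteq> v0 l)"

(* directed paths as nonempty vertex lists; [v] is the trivial path *)
definition dpath :: "nat \<Rightarrow> (nat \<Rightarrow> 'v set) \<Rightarrow> (nat \<Rightarrow> 'v) \<Rightarrow> 'v list \<Rightarrow> bool" where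
  "dpath L V v0 p \<longleftrightarrow> p \<noteq> [] \<and> (\<forall>i. Suc i < length p \<longrightarrow> dedge L V v0 (p ! i) (p ! Suc i))"

definition paths :: "nat \<Rightarrow> (nat \<Rightarrow> 'v set) \<Rightarrow> (nat \<Rightarrow> 'v) \<Rightarrow> 'v \<Rightarrow> 'v \<Rightarrow> 'v list set" where
  "paths L V v0 v u = {p. dpath L V v0 p \<and> hd p = v \<and> last p = u}"

definition reach :: "nat \<Rightarrow> (nat \<Rightarrow> 'v set) \<Rightarrow> (nat \<Rightarrow> 'v) \<Rightarrow> 'v \<Rightarrow> 'v set" where
  "reach L V v0 v = {u. paths L V v0 v u \<noteq> {}}"

definition pcoef :: "nat \<Rightarrow> (nat \<Rightarrow> 'v set) \<Rightarrow> (nat \<Rightarrow> 'v) \<Rightarrow> 'v \<Rightarrow> 'v \<Rightarrow> complex" where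
  "pcoef L V v0 v u = (\<Sum>p\<in>paths L V v0 v u. (-1) ^ (length p - 1))"

definition aop :: "nat \<Rightarrow> (nat \<Rightarrow> 'v set) \<Rightarrow> (nat \<Rightarrow> 'v) \<Rightarrow> ('v::linorder) \<Rightarrow> spin \<Rightarrow> 'v oper" where
  "aop L V v0 v \<sigma> \<Psi> = (\<lambda>S. \<Sum>u\<in>reach L V v0 v. pcoef L V v0 v u * cann (u, \<sigma>) \<Psi> S)"

(* adjoint of aop (coefficients are real) *)
definition adag :: "nat \<Rightarrow> (nat \<Rightarrow> 'v set) \<Rightarrow> (nat \<Rightarrow> 'v) \<Rightarrow> ('v::linorder) \<Rightarrow> spin \<Rightarrow> 'v oper" where
  "adag L V v0 v \<sigma> \<Psi> = (\<lambda>S. \<Sum>u\<in>reach L V v0 v. pcoef L V v0 v u * cdag (u, \<sigma>) \<Psi> S)"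

definition directly_connected :: "nat \<Rightarrow> (nat \<Rightarrow> 'v set) \<Rightarrow> (nat \<Rightarrow> 'v) \<Rightarrow> spin \<Rightarrow> ('v::linorder) \<Rightarrow> 'v \<Rightarrow> bool" where
  "directly_connected L V v0 \<sigma> v v' \<longleftrightarrow>
     (\<exists>u\<in>allV L V. anticomm (cdag (u, \<sigma>)) (aop L V v0 v \<sigma>) \<noteq> zero_op \<and>
                   anticomm (cdag (u, \<sigma>)) (aop L V v0 v' \<sigma>) \<noteq> zero_op)"

definition family_connected :: "nat \<Rightarrow> (nat \<Rightarrow> 'v set) \<Rightarrow> (nat \<Rightarrow> 'v) \<Rightarrow> spin \<Rightarrow> ('v::linorder) set \<Rightarrow> bool" where
  "family_connected L V v0 \<sigma> W \<longleftrightarrow>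
     (\<forall>v\<in>W. \<forall>v'\<in>W. (\<lambda>x y. x \<in> W \<and> y \<in> W \<and> directly_connected L V v0 \<sigma> x y)\<^sup>*\<^sup>* v v')"

definition bop :: "(nat \<Rightarrow> 'v set) \<Rightarrow> nat \<Rightarrow> spin \<Rightarrow> ('v::linorder) oper" where
  "bop V l \<sigma> \<Psi> = (\<lambda>S. \<Sum>v\<in>V l. cann (v, \<sigma>) \<Psi> S)"

definition bdag :: "(nat \<Rightarrow> 'v set) \<Rightarrow> nat \<Rightarrow> spin \<Rightarrow> ('v::linorder) oper" where
  "bdag V l \<sigma> \<Psi> = (\<lambda>S. \<Sum>v\<in>V l. cdag (v, \<sigma>) \<Psi> S)"

definition H_hop :: "nat \<Rightarrow> (nat \<Rightarrow> 'v set) \<Rightarrow> real \<Rightarrow> ('v::linorder) oper" where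
  "H_hop L V t \<Psi> = (\<lambda>S. of_real t * (\<Sum>l\<in>{1..L}. \<Sum>\<sigma>\<in>{Up, Dn}. bdag V l \<sigma> (bop V l \<sigma> \<Psi>) S))"

definition H_hub :: "nat \<Rightarrow> (nat \<Rightarrow> 'v set) \<Rightarrow> real \<Rightarrow> real \<Rightarrow> ('v::linorder) oper" where
  "H_hub L V t U \<Psi> = (\<lambda>S. H_hop L V t \<Psi> S +
       of_real U * (\<Sum>v\<in>allV L V. numop (v, Up) (numop (v, Dn) \<Psi>) S))"

(* (prod_{v in W} A_v) Psi, product written in increasing order of v *)
definition ordered_prod :: "('v::linorder) set \<Rightarrow> ('v \<Rightarrow> 'v oper) \<Rightarrow> 'v state \<Rightarrow> 'v state" where
  "ordered_prod W A \<Psi> = foldr A (sorted_list_of_set W) \<Psi>"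

definition Phi_up :: "nat \<Rightarrow> (nat \<Rightarrow> 'v set) \<Rightarrow> (nat \<Rightarrow> 'v) \<Rightarrow> ('v::linorder) state" where
  "Phi_up L V v0 = ordered_prod (whiteV L V v0) (\<lambda>v. adag L V v0 v Up) vacuum"

(* image of Phi_up under the SU(2) spin rotation g, whose first column is (\<alpha>, \<beta>):
   c^dag_{u,Up} is mapped to \<alpha> c^dag_{u,Up} + \<beta> c^dag_{u,Dn}, and the vacuum is invariant *)
definition adag_rot :: "nat \<Rightarrow> (nat \<Rightarrow> 'v set) \<Rightarrow> (nat \<Rightarrow> 'v) \<Rightarrow> complex \<Rightarrow> complex \<Rightarrow> ('v::linorder) \<Rightarrow> 'v oper" where
  "adag_rot L V v0 \<alpha> \<beta> v \<Psi> = (\<lambda>S. \<alpha> * adag L V v0 v Up \<Psi> S + \<beta> * adag L V v0 v Dn \<Psi> S)"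

definition Phi_rot :: "nat \<Rightarrow> (nat \<Rightarrow> 'v set) \<Rightarrow> (nat \<Rightarrow> 'v) \<Rightarrow> complex \<Rightarrow> complex \<Rightarrow> ('v::linorder) state" where
  "Phi_rot L V v0 \<alpha> \<beta> = ordered_prod (whiteV L V v0) (adag_rot L V v0 \<alpha> \<beta>) vacuum"

definition spin_rotations :: "nat \<Rightarrow> (nat \<Rightarrow> 'v set) \<Rightarrow> (nat \<Rightarrow> 'v) \<Rightarrow> ('v::linorder) state set" where
  "spin_rotations L V v0 = {Phi_rot L V v0 \<alpha> \<beta> | \<alpha> \<beta>. cmod \<alpha> ^ 2 + cmod \<beta> ^ 2 = 1}"

end

theory Submission
  imports Defs "HOL-Analysis.Complex_Transcendental"
begin

text \<open>
  Both terms of \<open>H\<close> are positive semidefinite, \<open>t b\<^sup>\<dagger>b\<close> and \<open>U n\<^sub>\<up>n\<^sub>\<down>\<close>, so no energy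
  is negative and a zero-energy state is annihilated by every \<open>b\<^sub>l\<^sub>,\<^sub>\<sigma>\<close> and has no
  doubly occupied site. The path coefficients of \<open>a\<^sub>v\<close> sum to zero over every block \<open>V\<^sub>l\<close>, so
  \<open>a\<^sup>\<dagger>\<^sub>v\<^sub>,\<^sub>\<tau>\<close> anticommutes with every \<open>b\<^sub>l\<^sub>,\<^sub>\<sigma>\<close>: products of the \<open>a\<^sup>\<dagger>\<close> over the white
  vertices have energy zero. Conversely, a state annihilated by all \<open>b\<^sub>l\<^sub>,\<^sub>\<sigma>\<close> is determined by
  its amplitudes on configurations avoiding the black vertices, so a zero-energy state is a
  combination \<open>\<Sum>\<^sub>D c\<^sub>D \<Prod>\<^sub>v a\<^sup>\<dagger>\<^sub>v\<^sub>,\<^sub>\<sigma>\<^sub>D\<^sub>(\<^sub>v\<^sub>) \<Phi>\<^sub>0\<close> over the sets \<open>D\<close> of white vertices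
  carrying spin down. If \<open>a\<^sub>v\<close> and \<open>a\<^sub>v\<^sub>'\<close> share a vertex \<open>u\<close>, absence of double occupancy
  at \<open>u\<close> forces \<open>c\<^sub>D\<close> to stay unchanged when a down spin moves from \<open>v\<close> to \<open>v'\<close>; by
  connectedness \<open>c\<^sub>D\<close> depends only on \<open>|D|\<close>. Such combinations are spanned by the spin
  rotations of \<open>\<Phi>\<^sub>\<up>\<close>, by discrete Fourier inversion in the rotation angle.
\<close>

lemma UNIV_spin: "(UNIV :: spin set) = {Up, Dn}"
  using spin.exhaust by auto

lemma all_spin_iff: "(\<forall>\<sigma>. P \<sigma>) \<longleftrightarrow> P Up \<and> P Dn"
  by (metis spin.exhaust)

instance spin :: finite
  by standard (simp add: UNIV_spin)

lemma fsign_cases: "fsign S m = 1 \<or> fsign S m = -1"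
  unfolding fsign_def by (cases "even (card {x \<in> S. mode_before x m})") auto

lemma fsign_sq [simp]: "fsign S m * fsign S m = 1"
  using fsign_cases[of S m] by auto

lemma fsign_nonzero [simp]: "fsign S m \<noteq> 0"
  using fsign_cases[of S m] by auto

lemma cnj_fsign [simp]: "cnj (fsign S m) = fsign S m"
  using fsign_cases[of S m] by auto

lemma mode_before_asym_iff: "m \<noteq> m' \<Longrightarrow> mode_before m m' \<longleftrightarrow> \<not> mode_before m' m"
  unfolding mode_before_def by (cases m; cases m'; cases "snd m"; cases "snd m'") auto

lemma fsign_insert:
  fixes S :: "('v::{finite,linorder}) mode set"
  assumes "x \<notin> S"
  shows "fsign (insert x S) m = (if mode_before x m then -1 else 1) * fsign S m"
proof (cases "mode_before x m")
  case True
  then have "{y\<in>insert x S. mode_before y m} = insert x {y\<in>S. mode_before y m}" by auto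
  then show ?thesis using True assms unfolding fsign_def by simp
next
  case False
  then have "{y\<in>insert x S. mode_before y m} = {y\<in>S. mode_before y m}" by auto
  then show ?thesis using False unfolding fsign_def by simp
qed

lemma cann_cdag_add_cdag_cann:
  fixes \<Psi> :: "('v::{finite,linorder}) state"
  shows "cann m (cdag m \<Psi>) S + cdag m (cann m \<Psi>) S = \<Psi> S"
  unfolding cann_def cdag_def by (cases "m \<in> S") (simp_all add: insert_absorb mult.assoc[symmetric])

lemma cann_cdag_add_cdag_cann_distinct:
  fixes \<Psi> :: "('v::{finite,linorder}) state"
  assumes "m \<noteq> m'"
  shows "cann m (cdag m' \<Psi>) S + cdag m' (cann m \<Psi>) S = 0"
proof (cases "m \<notin> S \<and> m' \<in> S")
  case True
  define A where "A = S - {m'}"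
  have mA: "m \<notin> A" and m'A: "m' \<notin> A" and SA: "S = insert m' A" using True A_def by auto
  have "insert m S - {m'} = insert m A" using assms True A_def by auto
  then have "cann m (cdag m' \<Psi>) S = fsign S m * (fsign (insert m A) m' * \<Psi> (insert m A))"
    unfolding cann_def cdag_def using True by simp
  moreover have "cdag m' (cann m \<Psi>) S = fsign A m' * (fsign A m * \<Psi> (insert m A))"
    unfolding cann_def cdag_def using True A_def mA by simp
  ultimately show ?thesis
    using SA fsign_insert[OF m'A, of m] fsign_insert[OF mA, of m'] mode_before_asym_iff[OF assms]
    by (auto simp: algebra_simps)
next
  case False
  then show ?thesis unfolding cann_def cdag_def using assms by auto
qed

lemma cann_vacuum: "cann m vacuum = (\<lambda>S. 0)"
  unfolding cann_def vacuum_def by auto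

lemma cann_lin: "cann m (\<lambda>S. \<Sum>x\<in>A. k x * f x S) S = (\<Sum>x\<in>A. k x * cann m (f x) S)"
  unfolding cann_def by (auto simp: sum_distrib_left algebra_simps)

lemma cdag_lin: "cdag m (\<lambda>S. \<Sum>x\<in>A. k x * f x S) S = (\<Sum>x\<in>A. k x * cdag m (f x) S)"
  unfolding cdag_def by (auto simp: sum_distrib_left algebra_simps)

lemma cann_smult: "cann m (\<lambda>S. c * \<Psi> S) S = c * cann m \<Psi> S"
  unfolding cann_def by auto

lemma cann_diff: "cann m (\<lambda>S. X S - Y S) S = cann m X S - cann m Y S"
  unfolding cann_def by (auto simp: right_diff_distrib)

lemma cdag_zero: "cdag m (\<lambda>S. 0) S = 0"
  unfolding cdag_def by auto

lemma bop_lin: "bop V l \<sigma> (\<lambda>S. \<Sum>x\<in>A. k x * f x S) S = (\<Sum>x\<in>A. k x * bop V l \<sigma> (f x) S)"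
  unfolding bop_def by (simp add: cann_lin sum_distrib_left sum.swap[of _ A])

lemma bop_diff: "bop V l \<sigma> (\<lambda>S. X S - Y S) S = bop V l \<sigma> X S - bop V l \<sigma> Y S"
  unfolding bop_def cann_diff by (rule sum_subtractf)

lemma numop_apply: "numop m \<Psi> S = (if m \<in> S then \<Psi> S else 0)"
  unfolding numop_def cdag_def cann_def by (auto simp: insert_absorb mult.assoc[symmetric])

definition state_inner :: "('v::finite) state \<Rightarrow> 'v state \<Rightarrow> complex" where
  "state_inner X Y = (\<Sum>S\<in>UNIV. cnj (X S) * Y S)"

abbreviation state_norm_sq :: "('v::finite) state \<Rightarrow> real" where
  "state_norm_sq X \<equiv> \<Sum>S\<in>UNIV. (cmod (X S))\<^sup>2"

lemma state_inner_cdag: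
  fixes X :: "('v::{finite,linorder}) state"
  shows "state_inner X (cdag m Y) = state_inner (cann m X) Y"
proof -
  have "state_inner X (cdag m Y) = (\<Sum>S\<in>{S. m \<in> S}. cnj (X S) * (fsign (S - {m}) m * Y (S - {m})))"
    unfolding state_inner_def cdag_def by (rule sum.mono_neutral_cong_right) auto
  also have "\<dots> = (\<Sum>T\<in>{T. m \<notin> T}. cnj (X (insert m T)) * (fsign T m * Y T))"
    by (rule sum.reindex_bij_witness[where i="insert m" and j="\<lambda>S. S - {m}"]) (auto simp: insert_absorb)
  also have "\<dots> = state_inner (cann m X) Y"
    unfolding state_inner_def cann_def by (rule sum.mono_neutral_cong_left) (auto simp: algebra_simps)
  finally show ?thesis .
qed

lemma state_inner_self: "state_inner X X = of_real (state_norm_sq X)"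
  unfolding state_inner_def of_real_sum by (intro sum.cong refl) (simp only: complex_norm_square mult.commute)

lemma state_norm_sq_eq_0_iff: "state_norm_sq X = 0 \<longleftrightarrow> X = (\<lambda>S. 0)"
  by (auto simp: sum_nonneg_eq_0_iff)

lemma state_inner_sum_right: "state_inner X (\<lambda>S. \<Sum>x\<in>A. f x S) = (\<Sum>x\<in>A. state_inner X (f x))"
  unfolding state_inner_def by (simp add: sum_distrib_left sum.swap[of _ A])

lemma state_inner_sum_left: "state_inner (\<lambda>S. \<Sum>x\<in>A. f x S) Y = (\<Sum>x\<in>A. state_inner (f x) Y)"
  unfolding state_inner_def by (simp add: sum_distrib_right sum.swap[of _ A])

lemma state_inner_add_right: "state_inner X (\<lambda>S. Y S + Z S) = state_inner X Y + state_inner X Z"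
  unfolding state_inner_def by (simp add: distrib_left sum.distrib)

lemma state_inner_smult_right: "state_inner X (\<lambda>S. c * Y S) = c * state_inner X Y"
  unfolding state_inner_def by (simp add: sum_distrib_left algebra_simps)

lemma state_inner_bdag:
  fixes X :: "('v::{finite,linorder}) state"
  shows "state_inner X (bdag V l \<sigma> Y) = state_inner (bop V l \<sigma> X) Y"
  unfolding bdag_def bop_def state_inner_sum_right state_inner_sum_left by (simp add: state_inner_cdag)

lemma state_inner_double_occupancy:
  fixes X :: "('v::{finite,linorder}) state"
  shows "state_inner X (numop (v, Up) (numop (v, Dn) X)) =
    of_real (\<Sum>S\<in>UNIV. if (v, Up) \<in> S \<and> (v, Dn) \<in> S then (cmod (X S))\<^sup>2 else 0)"
  unfolding state_inner_def of_real_sum numop_apply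
proof (intro sum.cong refl)
  fix S
  have "cnj (X S) * X S = of_real ((cmod (X S))\<^sup>2)"
    by (simp only: complex_norm_square mult.commute)
  then show "cnj (X S) * (if (v, Up) \<in> S then if (v, Dn) \<in> S then X S else 0 else 0) =
    of_real (if (v, Up) \<in> S \<and> (v, Dn) \<in> S then (cmod (X S))\<^sup>2 else 0)" by auto
qed

locale hubbard_construction =
  fixes L :: nat and V :: "nat \<Rightarrow> ('v::{finite,linorder}) set" and v0 :: "nat \<Rightarrow> 'v"
  assumes valid: "valid_construction L V v0"
begin

abbreviation "W \<equiv> whiteV L V v0"
abbreviation "AV \<equiv> allV L V"
abbreviation "black \<equiv> v0 ` {1..L}"
abbreviation "ad \<equiv> adag L V v0"
abbreviation "pc \<equiv> pcoef L V v0"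
abbreviation "rc \<equiv> reach L V v0"

lemma finite_V: "l \<in> {1..L} \<Longrightarrow> finite (V l)"
  using valid unfolding valid_construction_def by auto

lemma v0_in_V: "l \<in> {1..L} \<Longrightarrow> v0 l \<in> V l"
  using valid unfolding valid_construction_def by auto

lemma v0_notin_earlier_V:
  assumes "l \<in> {1..L}" "k \<in> {1..L}" "k < l"
  shows "v0 l \<notin> V k"
proof -
  have "v0 l \<notin> (\<Union>k\<in>{1..<l}. V k)"
    using valid assms unfolding valid_construction_def by auto
  then show ?thesis using assms by auto
qed

lemma v0_inj: "l \<in> {1..L} \<Longrightarrow> k \<in> {1..L} \<Longrightarrow> v0 l = v0 k \<Longrightarrow> l = k"
  by (metis linorder_neqE_nat v0_in_V v0_notin_earlier_V)

lemma black_subset_AV: "black \<subseteq> AV"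
  unfolding allV_def using v0_in_V by blast

lemma white_not_black: "v \<in> W \<Longrightarrow> v \<notin> black"
  unfolding whiteV_def by auto

lemma white_in_AV: "v \<in> W \<Longrightarrow> v \<in> AV"
  unfolding whiteV_def by auto

lemma AV_not_black_white: "v \<in> AV \<Longrightarrow> v \<notin> black \<Longrightarrow> v \<in> W"
  unfolding whiteV_def by auto

lemma dedge_target:
  "dedge L V v0 x y \<Longrightarrow> \<exists>l\<in>{1..L}. y = v0 l \<and> x \<in> V l \<and> x \<noteq> v0 l"
  unfolding dedge_def by auto

lemma dedge_from_black:
  assumes "dedge L V v0 (v0 k) y" "k \<in> {1..L}"
  shows "\<exists>l\<in>{1..L}. y = v0 l \<and> k < l"
proof -
  obtain l where l: "l \<in> {1..L}" "y = v0 l" "v0 k \<in> V l" "v0 k \<noteq> v0 l"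
    using dedge_target[OF assms(1)] by blast
  have "\<not> l < k" using v0_notin_earlier_V[OF assms(2) l(1)] l by auto
  moreover have "k \<noteq> l" using l by auto
  ultimately show ?thesis using l by auto
qed

lemma dpath_nth_black:
  assumes "dpath L V v0 p" "1 \<le> i" "i < length p"
  shows "\<exists>l\<in>{1..L}. p ! i = v0 l \<and> i \<le> l"
  using assms(2,3)
proof (induction i)
  case 0 then show ?case by simp
next
  case (Suc i)
  have e: "dedge L V v0 (p ! i) (p ! Suc i)" using assms(1) Suc.prems unfolding dpath_def by auto
  show ?case
  proof (cases "i = 0")
    case True
    then show ?thesis using dedge_target[OF e] by force
  next
    case False
    then obtain k where k: "k \<in> {1..L}" "p ! i = v0 k" "i \<le> k" using Suc by auto
    obtain l where "l \<in> {1..L}" "p ! Suc i = v0 l" "k < l"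
      using dedge_from_black[of k "p ! Suc i"] e k by auto
    then show ?thesis using k by auto
  qed
qed

lemma dpath_last_black:
  assumes "dpath L V v0 p" "length p \<noteq> 1"
  shows "last p \<in> black"
proof -
  have "p \<noteq> []" using assms(1) unfolding dpath_def by auto
  then have "1 \<le> length p - 1" "length p - 1 < length p"
    using assms(2) length_greater_0_conv[of p] by linarith+
  then obtain l where "l \<in> {1..L}" "p ! (length p - 1) = v0 l"
    using dpath_nth_black[OF assms(1)] by blast
  then show ?thesis using \<open>p \<noteq> []\<close> by (simp add: last_conv_nth)
qed

lemma dpath_length_le: "dpath L V v0 p \<Longrightarrow> length p \<le> Suc L"
proof (cases "length p \<le> 1")
  case False
  assume "dpath L V v0 p"
  moreover have "1 \<le> length p - 1" "length p - 1 < length p" using False by auto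
  ultimately obtain l where "l \<in> {1..L}" "length p - 1 \<le> l"
    using dpath_nth_black by blast
  then show ?thesis by auto
qed auto

lemma finite_paths: "finite (paths L V v0 v u)"
proof (rule finite_subset)
  show "paths L V v0 v u \<subseteq> {p. set p \<subseteq> UNIV \<and> length p \<le> Suc L}"
    unfolding paths_def using dpath_length_le by auto
  show "finite {p. set p \<subseteq> (UNIV::'v set) \<and> length p \<le> Suc L}"
    by (rule finite_lists_length_le) simp
qed

lemma dpath_singleton: "dpath L V v0 p \<Longrightarrow> length p = 1 \<Longrightarrow> p = [hd p]"
  by (cases p) auto

lemma reach_black:
  assumes "u \<in> rc v" "u \<noteq> v"
  shows "u \<in> black"
proof -
  obtain p where p: "dpath L V v0 p" "hd p = v" "last p = u"
    using assms(1) unfolding reach_def paths_def by auto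
  have "length p \<noteq> 1" using dpath_singleton[OF p(1)] p assms(2) by (metis last_ConsL)
  then have "last p \<in> black" by (rule dpath_last_black[OF p(1)])
  then show ?thesis using p(3) by simp
qed

lemma paths_white_self:
  assumes "v \<in> W"
  shows "paths L V v0 v v = {[v]}"
proof
  show "{[v]} \<subseteq> paths L V v0 v v" unfolding paths_def dpath_def by auto
  show "paths L V v0 v v \<subseteq> {[v]}"
  proof
    fix p assume "p \<in> paths L V v0 v v"
    then have p: "dpath L V v0 p" "hd p = v" "last p = v" unfolding paths_def by auto
    then have "length p = 1" using dpath_last_black white_not_black[OF assms] by metis
    then show "p \<in> {[v]}" using dpath_singleton[OF p(1)] p(2) by auto
  qed
qed

lemma pcoef_self: "v \<in> W \<Longrightarrow> pc v v = 1"
  unfolding pcoef_def by (simp add: paths_white_self)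

lemma reach_self: "v \<in> W \<Longrightarrow> v \<in> rc v"
  unfolding reach_def using paths_white_self by auto

lemma pcoef_not_reach: "u \<notin> rc v \<Longrightarrow> pc v u = 0"
  unfolding pcoef_def reach_def by auto

lemma reach_subset_AV: "v \<in> W \<Longrightarrow> rc v \<subseteq> AV"
  using reach_black white_in_AV black_subset_AV by blast

lemma dpath_snoc_iff:
  assumes "p \<noteq> []"
  shows "dpath L V v0 (p @ [y]) \<longleftrightarrow> dpath L V v0 p \<and> dedge L V v0 (last p) y"
proof -
  have A: "\<And>i. Suc i < length p \<Longrightarrow> (p @ [y]) ! i = p ! i \<and> (p @ [y]) ! Suc i = p ! Suc i"
    by (simp add: nth_append)
  have B: "(p @ [y]) ! (length p - 1) = last p" "(p @ [y]) ! Suc (length p - 1) = y"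
    using assms by (auto simp: nth_append last_conv_nth)
  show ?thesis
  proof
    assume d: "dpath L V v0 (p @ [y])"
    have "dpath L V v0 p" unfolding dpath_def
    proof (intro conjI allI impI)
      show "p \<noteq> []" by fact
      fix i assume i: "Suc i < length p"
      then have "dedge L V v0 ((p @ [y]) ! i) ((p @ [y]) ! Suc i)"
        using d unfolding dpath_def by simp
      then show "dedge L V v0 (p ! i) (p ! Suc i)" using A[OF i] by simp
    qed
    moreover have "dedge L V v0 (last p) y"
    proof -
      have "Suc (length p - 1) < length (p @ [y])" using assms by simp
      then have "dedge L V v0 ((p @ [y]) ! (length p - 1)) ((p @ [y]) ! Suc (length p - 1))"
        using d unfolding dpath_def by blast
      then show ?thesis using B by simp
    qed
    ultimately show "dpath L V v0 p \<and> dedge L V v0 (last p) y" by simp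
  next
    assume d: "dpath L V v0 p \<and> dedge L V v0 (last p) y"
    show "dpath L V v0 (p @ [y])" unfolding dpath_def
    proof (intro conjI allI impI)
      show "p @ [y] \<noteq> []" by simp
      fix i assume i: "Suc i < length (p @ [y])"
      show "dedge L V v0 ((p @ [y]) ! i) ((p @ [y]) ! Suc i)"
      proof (cases "Suc i < length p")
        case True then show ?thesis using d A[of i] unfolding dpath_def by auto
      next
        case False
        then have "i = length p - 1" using i by auto
        then show ?thesis using d B by simp
      qed
    qed
  qed
qed

lemma paths_to_black:
  assumes v: "v \<in> W" and l: "l \<in> {1..L}"
  shows "paths L V v0 v (v0 l) = (\<lambda>p. p @ [v0 l]) ` (\<Union>x\<in>V l - {v0 l}. paths L V v0 v x)"
proof
  show "(\<lambda>p. p @ [v0 l]) ` (\<Union>x\<in>V l - {v0 l}. paths L V v0 v x) \<subseteq> paths L V v0 v (v0 l)"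
  proof
    fix q assume "q \<in> (\<lambda>p. p @ [v0 l]) ` (\<Union>x\<in>V l - {v0 l}. paths L V v0 v x)"
    then obtain p x where px: "x \<in> V l" "x \<noteq> v0 l" "p \<in> paths L V v0 v x" "q = p @ [v0 l]"
      by auto
    have d: "dpath L V v0 p" "hd p = v" "last p = x" "p \<noteq> []"
      using px(3) unfolding paths_def dpath_def by auto
    have "dedge L V v0 x (v0 l)" unfolding dedge_def using px l by auto
    then show "q \<in> paths L V v0 v (v0 l)"
      unfolding paths_def using px(4) d dpath_snoc_iff[OF d(4)] by simp
  qed
  show "paths L V v0 v (v0 l) \<subseteq> (\<lambda>p. p @ [v0 l]) ` (\<Union>x\<in>V l - {v0 l}. paths L V v0 v x)"
  proof
    fix q assume q: "q \<in> paths L V v0 v (v0 l)"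
    then have d: "dpath L V v0 q" "hd q = v" "last q = v0 l" unfolding paths_def by auto
    define p where "p = butlast q"
    have qp: "q = p @ [v0 l]" using d p_def by (metis append_butlast_last_id dpath_def)
    have "p \<noteq> []"
      using qp d(2) white_not_black[OF v] l by (auto simp: p_def)
    then have dp: "dpath L V v0 p" "dedge L V v0 (last p) (v0 l)"
      using d(1) qp dpath_snoc_iff by auto
    then have "last p \<in> V l - {v0 l}"
      using dedge_target v0_inj[OF l] by fastforce
    moreover have "p \<in> paths L V v0 v (last p)"
      unfolding paths_def using dp \<open>p \<noteq> []\<close> d(2) qp by simp
    ultimately show "q \<in> (\<lambda>p. p @ [v0 l]) ` (\<Union>x\<in>V l - {v0 l}. paths L V v0 v x)"
      using qp by blast
  qed
qed

text \<open>Every path into \<open>v0 l\<close> extends a unique path into another vertex of \<open>V l\<close> by one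
  vertex, which flips its sign.\<close>

lemma sum_pcoef_block_eq_0:
  assumes v: "v \<in> W" and l: "l \<in> {1..L}"
  shows "(\<Sum>u\<in>V l. pc v u) = 0"
proof -
  have sign: "(-1::complex) ^ (length (p @ [v0 l]) - 1) = - ((-1) ^ (length p - 1))"
    if "p \<in> paths L V v0 v x" for p x
    using that unfolding paths_def dpath_def by (cases p) auto
  have "pc v (v0 l) = (\<Sum>p\<in>(\<Union>x\<in>V l - {v0 l}. paths L V v0 v x). (-1) ^ (length (p @ [v0 l]) - 1))"
    unfolding pcoef_def paths_to_black[OF v l] by (subst sum.reindex) (auto simp: inj_on_def)
  also have "\<dots> = (\<Sum>x\<in>V l - {v0 l}. \<Sum>p\<in>paths L V v0 v x. (-1) ^ (length (p @ [v0 l]) - 1))"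
  proof (rule sum.UNION_disjoint)
    show "\<forall>x\<in>V l - {v0 l}. \<forall>y\<in>V l - {v0 l}. x \<noteq> y \<longrightarrow>
        paths L V v0 v x \<inter> paths L V v0 v y = {}"
      unfolding paths_def by auto
  qed (simp_all add: finite_V[OF l] finite_paths)
  also have "\<dots> = - (\<Sum>x\<in>V l - {v0 l}. pc v x)"
    unfolding pcoef_def using sign by (simp add: sum_negf)
  finally show ?thesis
    using finite_V[OF l] v0_in_V[OF l] by (simp add: sum.remove)
qed

end

definition down_spin :: "'v set \<Rightarrow> 'v \<Rightarrow> spin" where
  "down_spin D v = (if v \<in> D then Dn else Up)"

definition spin_config :: "('v \<Rightarrow> spin) \<Rightarrow> 'v set \<Rightarrow> 'v mode set" where
  "spin_config s A = (\<lambda>x. (x, s x)) ` A"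

text \<open>The sign of the permutation that sorts \<open>vs\<close>.\<close>

fun sort_sign :: "('v::linorder) list \<Rightarrow> complex" where
  "sort_sign [] = 1"
| "sort_sign (v # vs) = (-1) ^ card {x \<in> set vs. x < v} * sort_sign vs"

definition avoids :: "'v set \<Rightarrow> 'v mode set \<Rightarrow> bool" where
  "avoids B T \<longleftrightarrow> (\<forall>m\<in>T. fst m \<notin> B)"

lemma sort_sign_nonzero: "sort_sign vs \<noteq> 0"
  by (induction vs) auto

lemma avoids_Diff: "avoids B T \<Longrightarrow> avoids B (T - X)"
  unfolding avoids_def by auto

lemma fsign_spin_config:
  fixes s :: "('v::{finite,linorder}) \<Rightarrow> spin"
  assumes "v \<notin> A"
  shows "fsign (spin_config s A) (v, \<sigma>) = (-1) ^ card {x \<in> A. x < v}"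
proof -
  have "{y \<in> spin_config s A. mode_before y (v, \<sigma>)} = (\<lambda>x. (x, s x)) ` {x \<in> A. x < v}"
    unfolding spin_config_def mode_before_def using assms by auto
  moreover have "card ((\<lambda>x. (x, s x)) ` {x \<in> A. x < v}) = card {x \<in> A. x < v}"
    by (rule card_image) (auto simp: inj_on_def)
  ultimately show ?thesis unfolding fsign_def by simp
qed

lemma spin_config_down_spin_eq_iff:
  "spin_config (down_spin D) A = spin_config (down_spin D') A \<longleftrightarrow> D \<inter> A = D' \<inter> A"
proof
  have "(v, Dn) \<in> spin_config (down_spin E) A \<longleftrightarrow> v \<in> E" if "v \<in> A" for v E
    using that unfolding spin_config_def down_spin_def by (auto split: if_splits)
  then show "spin_config (down_spin D) A = spin_config (down_spin D') A \<Longrightarrow> D \<inter> A = D' \<inter> A"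
    by blast
next
  assume "D \<inter> A = D' \<inter> A"
  then have "down_spin D v = down_spin D' v" if "v \<in> A" for v
  proof -
    have "v \<in> D \<longleftrightarrow> v \<in> D'" using that \<open>D \<inter> A = D' \<inter> A\<close> by blast
    then show ?thesis unfolding down_spin_def by simp
  qed
  then show "spin_config (down_spin D) A = spin_config (down_spin D') A"
    unfolding spin_config_def by (auto simp: image_def)
qed

context hubbard_construction
begin

definition adag_product :: "('v \<Rightarrow> spin) \<Rightarrow> 'v list \<Rightarrow> 'v state" where
  "adag_product s vs = foldr (\<lambda>v. ad v (s v)) vs vacuum"

lemma adag_product_Nil [simp]: "adag_product s [] = vacuum"
  unfolding adag_product_def by simp

lemma adag_product_Cons [simp]: "adag_product s (v # vs) = ad v (s v) (adag_product s vs)"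
  unfolding adag_product_def by simp

lemma adag_product_cong: "(\<And>x. x \<in> set vs \<Longrightarrow> s x = s' x) \<Longrightarrow> adag_product s vs = adag_product s' vs"
  by (induction vs) auto

lemma adag_lin: "ad v \<tau> (\<lambda>S. \<Sum>x\<in>A. k x * f x S) S = (\<Sum>x\<in>A. k x * ad v \<tau> (f x) S)"
  unfolding adag_def by (simp add: cdag_lin sum_distrib_left sum.swap[of _ A] algebra_simps)

lemma adag_sum: "ad v \<tau> (\<lambda>S. \<Sum>x\<in>A. f x S) S = (\<Sum>x\<in>A. ad v \<tau> (f x) S)"
  using adag_lin[of v \<tau> "\<lambda>_. 1" f A S] by simp

lemma adag_zero: "ad v \<tau> (\<lambda>S. 0) S = 0"
  unfolding adag_def by (simp add: cdag_zero)

lemma cann_adag_add_adag_cann: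
  shows "cann (u, \<sigma>) (ad v \<tau> X) S + ad v \<tau> (cann (u, \<sigma>) X) S = (if \<sigma> = \<tau> then pc v u else 0) * X S"
proof -
  have "cann (u, \<sigma>) (ad v \<tau> X) S + ad v \<tau> (cann (u, \<sigma>) X) S
      = (\<Sum>x\<in>rc v. pc v x * (cann (u, \<sigma>) (cdag (x, \<tau>) X) S + cdag (x, \<tau>) (cann (u, \<sigma>) X) S))"
    unfolding adag_def cann_lin by (simp add: sum.distrib[symmetric] distrib_left)
  also have "\<dots> = (\<Sum>x\<in>rc v. pc v x * (if (u, \<sigma>) = (x, \<tau>) then X S else 0))"
  proof (intro sum.cong refl)
    fix x show "pc v x * (cann (u, \<sigma>) (cdag (x, \<tau>) X) S + cdag (x, \<tau>) (cann (u, \<sigma>) X) S)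
      = pc v x * (if (u, \<sigma>) = (x, \<tau>) then X S else 0)"
      using cann_cdag_add_cdag_cann[of "(u,\<sigma>)" X S]
        cann_cdag_add_cdag_cann_distinct[of "(u,\<sigma>)" "(x,\<tau>)" X S] by auto
  qed
  also have "\<dots> = (if \<sigma> = \<tau> then pc v u else 0) * X S"
  proof (cases "\<sigma> = \<tau> \<and> u \<in> rc v")
    case True
    then have "(\<Sum>x\<in>rc v. pc v x * (if (u, \<sigma>) = (x, \<tau>) then X S else 0)) = (\<Sum>x\<in>{u}. pc v x * X S)"
      by (intro sum.mono_neutral_cong_right) auto
    then show ?thesis using True by simp
  next
    case False
    then show ?thesis using pcoef_not_reach by (auto intro: sum.neutral)
  qed
  finally show ?thesis .
qed

lemma cann_adag:
  "cann (u, \<sigma>) (ad v \<tau> X) S = (if \<sigma> = \<tau> then pc v u else 0) * X S - ad v \<tau> (cann (u, \<sigma>) X) S"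
  using cann_adag_add_adag_cann[of u \<sigma> v \<tau> X S] by (simp add: algebra_simps)

lemma bop_adag:
  assumes v: "v \<in> W" and l: "l \<in> {1..L}"
  shows "bop V l \<sigma> (ad v \<tau> X) S = - ad v \<tau> (bop V l \<sigma> X) S"
proof -
  have "bop V l \<sigma> (ad v \<tau> X) S
      = (if \<sigma> = \<tau> then (\<Sum>u\<in>V l. pc v u) else 0) * X S - (\<Sum>u\<in>V l. ad v \<tau> (cann (u, \<sigma>) X) S)"
    unfolding bop_def cann_adag by (simp add: sum_subtractf sum_distrib_right)
  then show ?thesis
    unfolding bop_def using sum_pcoef_block_eq_0[OF v l] by (simp add: adag_sum)
qed

lemma bop_adag_product:
  assumes "set vs \<subseteq> W" and l: "l \<in> {1..L}"
  shows "bop V l \<sigma> (adag_product s vs) = (\<lambda>S. 0)"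
  using assms(1)
proof (induction vs)
  case Nil then show ?case by (simp add: bop_def cann_vacuum)
next
  case (Cons v vs)
  then show ?case using bop_adag[OF _ l] by (simp add: adag_zero)
qed

lemma adag_avoiding_black:
  assumes v: "v \<in> W" and T: "avoids black T"
  shows "ad v \<sigma> X T = cdag (v, \<sigma>) X T"
proof -
  have "(x, \<sigma>) \<notin> T" if "x \<in> rc v - {v}" for x
  proof -
    have "x \<in> black" using that reach_black by blast
    then show ?thesis using T unfolding avoids_def by force
  qed
  then have "cdag (x, \<sigma>) X T = 0" if "x \<in> rc v - {v}" for x
    using that unfolding cdag_def by simp
  then have "ad v \<sigma> X T = (\<Sum>x\<in>{v}. pc v x * cdag (x, \<sigma>) X T)"
    unfolding adag_def using reach_self[OF v] by (intro sum.mono_neutral_cong_right) auto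
  then show ?thesis using pcoef_self[OF v] by simp
qed

lemma adag_product_avoiding_black:
  assumes "distinct vs" "set vs \<subseteq> W" "avoids black T"
  shows "adag_product s vs T = (if T = spin_config s (set vs) then sort_sign vs else 0)"
  using assms
proof (induction vs arbitrary: T)
  case Nil then show ?case by (simp add: vacuum_def spin_config_def)
next
  case (Cons v vs)
  let ?m = "(v, s v)"
  have v: "v \<in> W" and vn: "v \<notin> set vs" using Cons.prems by auto
  have IH: "adag_product s vs (T - {?m}) = (if T - {?m} = spin_config s (set vs) then sort_sign vs else 0)"
  proof (rule Cons.IH)
    show "distinct vs" "set vs \<subseteq> W" using Cons.prems by auto
    show "avoids black (T - {?m})" using Cons.prems(3) by (rule avoids_Diff)
  qed
  have mnot: "?m \<notin> spin_config s (set vs)" using vn unfolding spin_config_def by auto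
  have cfg: "spin_config s (set (v # vs)) = insert ?m (spin_config s (set vs))"
    unfolding spin_config_def by auto
  have ad: "adag_product s (v # vs) T = cdag ?m (adag_product s vs) T"
    using adag_avoiding_black[OF v Cons.prems(3)] by simp
  show ?case
  proof (cases "?m \<in> T \<and> T - {?m} = spin_config s (set vs)")
    case True
    then have "T = spin_config s (set (v # vs))" using cfg by (metis insert_Diff)
    then show ?thesis using True ad IH fsign_spin_config[OF vn, of s "s v"] unfolding cdag_def by simp
  next
    case False
    have "T \<noteq> spin_config s (set (v # vs))"
    proof
      assume "T = spin_config s (set (v # vs))"
      then have "?m \<in> T \<and> T - {?m} = spin_config s (set vs)" using cfg mnot by simp
      then show False using False by blast
    qed
    moreover have "cdag ?m (adag_product s vs) T = 0" using False IH unfolding cdag_def by auto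
    ultimately show ?thesis using ad by simp
  qed
qed

lemma adag_product_support:
  assumes "set vs \<subseteq> W" "adag_product s vs S \<noteq> 0"
  shows "S \<subseteq> AV \<times> s ` set vs \<and> card S = length vs"
  using assms
proof (induction vs arbitrary: S)
  case Nil then show ?case by (simp add: vacuum_def split: if_splits)
next
  case (Cons v vs)
  have "(\<Sum>x\<in>rc v. pc v x * cdag (x, s v) (adag_product s vs) S) \<noteq> 0"
    using Cons.prems(2) by (simp add: adag_def)
  then obtain x where x: "x \<in> rc v" "cdag (x, s v) (adag_product s vs) S \<noteq> 0"
    by (metis (mono_tags, lifting) mult_zero_right sum.neutral)
  then have xS: "(x, s v) \<in> S" and nz: "adag_product s vs (S - {(x, s v)}) \<noteq> 0"
    unfolding cdag_def by (auto split: if_splits)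
  have IH: "S - {(x, s v)} \<subseteq> AV \<times> s ` set vs \<and> card (S - {(x, s v)}) = length vs"
    using Cons.IH[OF _ nz] Cons.prems by auto
  have "x \<in> AV" using reach_subset_AV x Cons.prems by auto
  moreover have "card S = Suc (card (S - {(x, s v)}))" using card_Suc_Diff1[of S "(x, s v)"] xS by simp
  ultimately show ?case using IH xS by auto
qed

end

definition hopping_form :: "nat \<Rightarrow> (nat \<Rightarrow> 'v set) \<Rightarrow> ('v::{finite,linorder}) state \<Rightarrow> real" where
  "hopping_form L V X = (\<Sum>l\<in>{1..L}. \<Sum>\<sigma>\<in>{Up, Dn}. state_norm_sq (bop V l \<sigma> X))"

definition double_occupancy :: "'v set \<Rightarrow> ('v::{finite,linorder}) state \<Rightarrow> real" where
  "double_occupancy A X =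
     (\<Sum>v\<in>A. \<Sum>S\<in>UNIV. if (v, Up) \<in> S \<and> (v, Dn) \<in> S then (cmod (X S))\<^sup>2 else 0)"

lemma state_inner_H_hub:
  fixes X :: "('v::{finite,linorder}) state"
  shows "state_inner X (H_hub L V t U X) = of_real (t * hopping_form L V X + U * double_occupancy (allV L V) X)"
proof -
  have "state_inner X (H_hub L V t U X)
      = of_real t * (\<Sum>l\<in>{1..L}. \<Sum>\<sigma>\<in>{Up, Dn}. state_inner X (bdag V l \<sigma> (bop V l \<sigma> X)))
       + of_real U * (\<Sum>v\<in>allV L V. state_inner X (numop (v, Up) (numop (v, Dn) X)))"
    unfolding H_hub_def H_hop_def state_inner_add_right state_inner_smult_right state_inner_sum_right
    by simp
  then show ?thesis
    unfolding state_inner_bdag state_inner_double_occupancy hopping_form_def double_occupancy_def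
      state_inner_self of_real_sum by simp
qed

lemma hopping_form_nonneg: "hopping_form L V X \<ge> 0"
  unfolding hopping_form_def by (intro sum_nonneg) auto

lemma double_occupancy_nonneg: "double_occupancy A X \<ge> 0"
  unfolding double_occupancy_def by (intro sum_nonneg) auto

lemma H_hub_eigenvalue_nonneg:
  fixes X :: "('v::{finite,linorder}) state"
  assumes "t > 0" "U > 0" "X \<noteq> (\<lambda>S. 0)" and eig: "H_hub L V t U X = (\<lambda>S. of_real E * X S)"
  shows "E \<ge> 0"
proof -
  have "of_real (t * hopping_form L V X + U * double_occupancy (allV L V) X) = of_real E * state_inner X X"
    unfolding eig state_inner_H_hub[symmetric] by (rule state_inner_smult_right)
  then have "t * hopping_form L V X + U * double_occupancy (allV L V) X = E * state_norm_sq X"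
    unfolding state_inner_self by (metis of_real_eq_iff of_real_mult)
  moreover have "t * hopping_form L V X + U * double_occupancy (allV L V) X \<ge> 0"
    using assms(1,2) hopping_form_nonneg double_occupancy_nonneg
    by (intro add_nonneg_nonneg mult_nonneg_nonneg) (simp_all add: less_imp_le)
  moreover have "state_norm_sq X > 0"
    using state_norm_sq_eq_0_iff[of X] assms(3) by (simp add: less_le sum_nonneg)
  ultimately show ?thesis by (simp add: zero_le_mult_iff)
qed

lemma H_hub_zero_energy:
  fixes X :: "('v::{finite,linorder}) state"
  assumes "t > 0" "U > 0" and eig: "H_hub L V t U X = (\<lambda>S. of_real 0 * X S)"
  shows "hopping_form L V X = 0" and "double_occupancy (allV L V) X = 0"
proof -
  have "state_inner X (H_hub L V t U X) = 0"
    unfolding eig state_inner_def by simp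
  then have "t * hopping_form L V X + U * double_occupancy (allV L V) X = 0"
    by (simp only: state_inner_H_hub of_real_eq_0_iff)
  then show "hopping_form L V X = 0" and "double_occupancy (allV L V) X = 0"
    using assms(1,2) hopping_form_nonneg[of L V X] double_occupancy_nonneg[of "allV L V" X]
    by (smt (verit) mult_pos_pos mult_nonneg_nonneg)+
qed

lemma hopping_form_eq_0_iff:
  "hopping_form L V X = 0 \<longleftrightarrow> (\<forall>l\<in>{1..L}. \<forall>\<sigma>. bop V l \<sigma> X = (\<lambda>S. 0))"
  unfolding hopping_form_def
  by (simp add: sum_nonneg_eq_0_iff sum_nonneg state_norm_sq_eq_0_iff add_nonneg_eq_0_iff
      all_spin_iff)

lemma double_occupancy_eq_0_iff:
  assumes "finite A"
  shows "double_occupancy A X = 0 \<longleftrightarrow> (\<forall>v\<in>A. \<forall>S. (v, Up) \<in> S \<and> (v, Dn) \<in> S \<longrightarrow> X S = 0)"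
  unfolding double_occupancy_def using assms by (simp add: sum_nonneg_eq_0_iff sum_nonneg)

lemma spin_config_of_inj_fst:
  assumes inj: "inj_on fst T" and img: "fst ` T = A"
  shows "T = spin_config (down_spin {v\<in>A. (v, Dn) \<in> T}) A"
proof -
  let ?D = "{v\<in>A. (v, Dn) \<in> T}"
  have spin: "a = down_spin ?D v" if "(v, a) \<in> T" for v a
  proof (cases a)
    case Up
    then have "(v, Dn) \<notin> T" using that inj unfolding inj_on_def by fastforce
    then show ?thesis using Up unfolding down_spin_def by simp
  next
    case Dn
    then show ?thesis using that img unfolding down_spin_def by force
  qed
  show ?thesis
  proof
    show "T \<subseteq> spin_config (down_spin ?D) A"
      unfolding spin_config_def using spin img by force
    show "spin_config (down_spin ?D) A \<subseteq> T"
      unfolding spin_config_def using spin img by force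
  qed
qed

context hubbard_construction
begin

abbreviation white_config :: "'v set \<Rightarrow> 'v mode set" where
  "white_config D \<equiv> spin_config (down_spin D) W"

definition zero_energy_state :: "'v state \<Rightarrow> bool" where
  "zero_energy_state \<Psi> \<longleftrightarrow> \<Psi> \<in> sector AV (card W) \<and>
     (\<forall>l\<in>{1..L}. \<forall>\<sigma>. bop V l \<sigma> \<Psi> = (\<lambda>S. 0)) \<and>
     (\<forall>v\<in>AV. \<forall>S. (v, Up) \<in> S \<and> (v, Dn) \<in> S \<longrightarrow> \<Psi> S = 0)"

definition black_modes :: "'v mode set \<Rightarrow> (nat \<times> spin) set" where
  "black_modes S = {p \<in> {1..L} \<times> UNIV. (v0 (fst p), snd p) \<in> S}"

definition black_weight :: "'v mode set \<Rightarrow> nat" where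
  "black_weight S = (\<Sum>p\<in>black_modes S. 2 ^ fst p)"

lemma finite_black_modes: "finite (black_modes S)"
  unfolding black_modes_def by (rule finite_subset[of _ "{1..L} \<times> UNIV"]) auto

text \<open>Moving an electron from \<open>v0 l\<close> to another vertex of \<open>V l\<close> vacates the black mode of
  level \<open>l\<close> and can fill black modes of lower levels only.\<close>

lemma black_weight_move_decreasing:
  assumes l: "l \<in> {1..L}" and m: "(v0 l, \<sigma>) \<in> S" and u: "u \<in> V l" "u \<noteq> v0 l"
  shows "black_weight (insert (u, \<sigma>) (S - {(v0 l, \<sigma>)})) < black_weight S"
proof -
  let ?S' = "insert (u, \<sigma>) (S - {(v0 l, \<sigma>)})"
  let ?B = "(\<lambda>k. (k, \<sigma>)) ` {1..<l}"
  have "black_modes ?S' \<subseteq> (black_modes S - {(l, \<sigma>)}) \<union> ?B"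
  proof
    fix p assume p: "p \<in> black_modes ?S'"
    obtain k \<tau> where pk: "p = (k, \<tau>)" by (cases p)
    have k: "k \<in> {1..L}" and kin: "(v0 k, \<tau>) \<in> ?S'" using p pk unfolding black_modes_def by auto
    show "p \<in> (black_modes S - {(l, \<sigma>)}) \<union> ?B"
    proof (cases "(v0 k, \<tau>) = (u, \<sigma>)")
      case True
      then have "\<not> l < k" "k \<noteq> l" using v0_notin_earlier_V[OF k l] u by auto
      then show ?thesis using True pk k by auto
    next
      case False
      then show ?thesis using kin pk k unfolding black_modes_def by auto
    qed
  qed
  then have "black_weight ?S' \<le> (\<Sum>p\<in>(black_modes S - {(l, \<sigma>)}) \<union> ?B. 2 ^ fst p)"
    unfolding black_weight_def by (intro sum_mono2) (auto simp: finite_black_modes)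
  also have "\<dots> \<le> (\<Sum>p\<in>black_modes S - {(l, \<sigma>)}. 2 ^ fst p) + (\<Sum>p\<in>?B. 2 ^ fst p)"
    by (simp add: sum_Un_nat finite_black_modes)
  also have "(\<Sum>p\<in>?B. 2 ^ fst p) = (\<Sum>k\<in>{1..<l}. (2::nat) ^ k)"
    by (subst sum.reindex) (auto simp: inj_on_def)
  also have "\<dots> < 2 ^ l"
  proof -
    have "(\<Sum>k\<in>{1..<l}. (2::nat) ^ k) \<le> (\<Sum>k=0..<l. 2 ^ k)" by (rule sum_mono2) auto
    moreover have "0 < (2::nat) ^ l" by simp
    ultimately show ?thesis using sum_power2[of l] by linarith
  qed
  finally have "black_weight ?S' < (\<Sum>p\<in>black_modes S - {(l, \<sigma>)}. 2 ^ fst p) + 2 ^ l" by simp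
  moreover have "(l, \<sigma>) \<in> black_modes S" using l m unfolding black_modes_def by auto
  then have "black_weight S = 2 ^ l + (\<Sum>p\<in>black_modes S - {(l, \<sigma>)}. 2 ^ fst p)"
    unfolding black_weight_def using finite_black_modes by (simp add: sum.remove)
  ultimately show ?thesis by simp
qed

text \<open>Induction on the black weight: \<open>b\<^sub>l\<^sub>,\<^sub>\<sigma> X = 0\<close> expresses the amplitude of a
  configuration occupying \<open>v0 l\<close> by amplitudes of configurations of smaller weight.\<close>

lemma bop_annihilated_eq_0:
  assumes b: "\<forall>l\<in>{1..L}. \<forall>\<sigma>. bop V l \<sigma> X = (\<lambda>S. 0)"
    and avoiding: "\<forall>T. avoids black T \<longrightarrow> X T = 0"
  shows "X S = 0"
proof (induction S rule: measure_induct_rule[where f=black_weight])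
  case (less S)
  show ?case
  proof (cases "avoids black S")
    case True then show ?thesis using avoiding by simp
  next
    case False
    then obtain l \<sigma> where l: "l \<in> {1..L}" "(v0 l, \<sigma>) \<in> S" unfolding avoids_def by auto
    define T where "T = S - {(v0 l, \<sigma>)}"
    have "cann (u, \<sigma>) X T = 0" if "u \<in> V l - {v0 l}" for u
    proof (cases "(u, \<sigma>) \<in> T")
      case False
      have "black_weight (insert (u, \<sigma>) T) < black_weight S"
        unfolding T_def using black_weight_move_decreasing l that by auto
      then show ?thesis using less unfolding cann_def by simp
    qed (simp add: cann_def)
    then have "(\<Sum>u\<in>V l. cann (u, \<sigma>) X T) = cann (v0 l, \<sigma>) X T"
      using finite_V[OF l(1)] v0_in_V[OF l(1)] by (simp add: sum.remove)
    moreover have "bop V l \<sigma> X T = 0" using b l by simp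
    then have "(\<Sum>u\<in>V l. cann (u, \<sigma>) X T) = 0" unfolding bop_def .
    moreover have "insert (v0 l, \<sigma>) T = S" unfolding T_def using l by auto
    ultimately show ?thesis unfolding cann_def T_def by simp
  qed
qed

lemma avoiding_support_white_config:
  assumes \<Psi>: "zero_energy_state \<Psi>" and T: "avoids black T" and nz: "\<Psi> T \<noteq> 0"
  shows "\<exists>D\<subseteq>W. T = white_config D"
proof -
  have TA: "T \<subseteq> AV \<times> UNIV" and cT: "card T = card W"
    using \<Psi> nz unfolding zero_energy_state_def sector_def by auto
  have dbl: "\<forall>v\<in>AV. \<forall>S. (v, Up) \<in> S \<and> (v, Dn) \<in> S \<longrightarrow> \<Psi> S = 0"
    using \<Psi> unfolding zero_energy_state_def by blast
  have fstT: "fst ` T \<subseteq> W"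
  proof
    fix v assume "v \<in> fst ` T"
    then obtain a where "(v, a) \<in> T" by auto
    then have "v \<in> AV" "v \<notin> black" using TA T unfolding avoids_def by auto
    then show "v \<in> W" by (rule AV_not_black_white)
  qed
  have uniq: "a = b" if "(v, a) \<in> T" "(v, b) \<in> T" for v a b
  proof (rule ccontr)
    assume "a \<noteq> b"
    then have "(v, Up) \<in> T \<and> (v, Dn) \<in> T" using that by (cases a; cases b) auto
    moreover have "v \<in> AV" using that TA by auto
    ultimately show False using dbl nz by blast
  qed
  have inj: "inj_on fst T"
    by (rule inj_onI) (metis prod.collapse uniq)
  have "fst ` T = W"
    using card_subset_eq[OF _ fstT] card_image[OF inj] cT by simp
  show ?thesis
  proof (intro exI conjI)
    show "{v \<in> W. (v, Dn) \<in> T} \<subseteq> W" by blast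
    show "T = white_config {v \<in> W. (v, Dn) \<in> T}"
      by (rule spin_config_of_inj_fst[OF inj \<open>fst ` T = W\<close>])
  qed
qed

lemma zero_energy_expansion_avoiding_black:
  assumes \<Psi>: "zero_energy_state \<Psi>" and \<pi>: "distinct \<pi>" "set \<pi> = W" and T: "avoids black T"
  shows "\<Psi> T = (\<Sum>D\<in>Pow W. \<Psi> (white_config D) / sort_sign \<pi> * adag_product (down_spin D) \<pi> T)"
proof -
  have ev: "adag_product (down_spin D) \<pi> T = (if T = white_config D then sort_sign \<pi> else 0)" for D
    using adag_product_avoiding_black[OF \<pi>(1) _ T] \<pi>(2) by simp
  show ?thesis
  proof (cases "\<exists>D0\<subseteq>W. T = white_config D0")
    case True
    then obtain D0 where D0: "D0 \<subseteq> W" "T = white_config D0" by auto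
    have "(\<Sum>D\<in>Pow W. \<Psi> (white_config D) / sort_sign \<pi> * adag_product (down_spin D) \<pi> T)
        = (\<Sum>D\<in>Pow W. if D = D0 then \<Psi> T else 0)"
    proof (rule sum.cong)
      fix D assume D: "D \<in> Pow W"
      have "white_config D0 = white_config D \<longleftrightarrow> D0 \<inter> W = D \<inter> W"
        by (rule spin_config_down_spin_eq_iff)
      also have "\<dots> \<longleftrightarrow> D = D0" using D0(1) D by auto
      finally have iff: "T = white_config D \<longleftrightarrow> D = D0" using D0(2) by simp
      show "\<Psi> (white_config D) / sort_sign \<pi> * adag_product (down_spin D) \<pi> T
          = (if D = D0 then \<Psi> T else 0)"
        using ev[of D] iff D0(2)[symmetric] sort_sign_nonzero[of \<pi>] by (cases "D = D0") simp_all
    qed simp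
    then show ?thesis using D0(1) by simp
  next
    case False
    then have "\<Psi> T = 0" using avoiding_support_white_config[OF \<Psi> T] by blast
    moreover have "(\<Sum>D\<in>Pow W. \<Psi> (white_config D) / sort_sign \<pi> * adag_product (down_spin D) \<pi> T) = 0"
      using ev False by (intro sum.neutral) auto
    ultimately show ?thesis by simp
  qed
qed

text \<open>The difference of both sides is annihilated by every \<open>b\<^sub>l\<^sub>,\<^sub>\<sigma>\<close> and vanishes on the
  configurations avoiding the black vertices.\<close>

lemma zero_energy_expansion:
  assumes \<Psi>: "zero_energy_state \<Psi>" and \<pi>: "distinct \<pi>" "set \<pi> = W"
  shows "\<Psi> = (\<lambda>S. \<Sum>D\<in>Pow W. \<Psi> (white_config D) / sort_sign \<pi> * adag_product (down_spin D) \<pi> S)"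
proof -
  define Y where "Y = (\<lambda>S. \<Sum>D\<in>Pow W. \<Psi> (white_config D) / sort_sign \<pi> * adag_product (down_spin D) \<pi> S)"
  define X where "X = (\<lambda>S. \<Psi> S - Y S)"
  have b: "\<forall>l\<in>{1..L}. \<forall>\<sigma>. bop V l \<sigma> \<Psi> = (\<lambda>S. 0)"
    using \<Psi> unfolding zero_energy_state_def by blast
  have "\<forall>l\<in>{1..L}. \<forall>\<sigma>. bop V l \<sigma> X = (\<lambda>S. 0)"
  proof (intro ballI allI ext)
    fix l \<sigma> S assume l: "l \<in> {1..L}"
    have "bop V l \<sigma> (adag_product (down_spin D) \<pi>) S = 0" for D
      using bop_adag_product[OF _ l] \<pi>(2) by simp
    then have "bop V l \<sigma> Y S = 0"
      unfolding Y_def bop_lin by simp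
    then show "bop V l \<sigma> X S = 0"
      unfolding X_def bop_diff using b l by simp
  qed
  moreover have "\<forall>T. avoids black T \<longrightarrow> X T = 0"
    unfolding X_def Y_def using zero_energy_expansion_avoiding_black[OF \<Psi> \<pi>] by simp
  ultimately have "X S = 0" for S by (rule bop_annihilated_eq_0)
  then show ?thesis unfolding X_def Y_def[symmetric] by auto
qed

end

context hubbard_construction
begin

lemma cann_adag_avoiding_black:
  assumes x: "x \<in> W" and T: "avoids black T" and xa: "(x, a) \<notin> T"
  shows "cann (u, \<sigma>) (ad x a Z) T = (if \<sigma> = a then pc x u else 0) * Z T"
proof -
  have "ad x a (cann (u, \<sigma>) Z) T = 0"
    using adag_avoiding_black[OF x T] xa unfolding cdag_def by simp
  then show ?thesis using cann_adag[of u \<sigma> x a Z T] by simp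
qed

lemma double_cann_adag_avoiding_black:
  assumes x: "x \<in> W" and T: "avoids black T" and xa: "\<forall>\<sigma>. (x, \<sigma>) \<notin> T"
  shows "cann (u, Dn) (cann (u, Up) (ad x a Z)) T
    = (if a = Up then pc x u else 0) * cann (u, Dn) Z T - (if a = Dn then pc x u else 0) * cann (u, Up) Z T"
proof -
  have "cann (u, Up) (ad x a Z) = (\<lambda>S. (if Up = a then pc x u else 0) * Z S - ad x a (cann (u, Up) Z) S)"
    using cann_adag by (intro ext) simp
  then have "cann (u, Dn) (cann (u, Up) (ad x a Z)) T
     = (if Up = a then pc x u else 0) * cann (u, Dn) Z T - cann (u, Dn) (ad x a (cann (u, Up) Z)) T"
    by (simp only: cann_diff cann_smult)
  then show ?thesis
    using cann_adag_avoiding_black[OF x T] xa by (auto simp: eq_commute)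
qed

lemma double_cann_adag_product:
  fixes u :: 'v
  assumes ww: "w \<in> W" "w' \<in> W" "w \<noteq> w'" and rest: "distinct rest" "set rest = W - {w, w'}"
    and D0: "D0 \<subseteq> W - {w, w'}" and D: "D \<subseteq> W"
  defines "T0 \<equiv> spin_config (down_spin D0) (W - {w, w'})"
    and "c \<equiv> pc w u * pc w' u * sort_sign rest"
  shows "cann (u, Dn) (cann (u, Up) (adag_product (down_spin D) (w # w' # rest))) T0
    = (if D = insert w' D0 then c else 0) - (if D = insert w D0 then c else 0)"
proof -
  define R where "R = adag_product (down_spin D) rest"
  have T0: "avoids black T0" unfolding T0_def avoids_def spin_config_def using white_not_black by auto
  have wT: "\<forall>\<sigma>. (w, \<sigma>) \<notin> T0" "\<forall>\<sigma>. (w', \<sigma>) \<notin> T0" unfolding T0_def spin_config_def by auto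
  have "R T0 = (if T0 = spin_config (down_spin D) (W - {w, w'}) then sort_sign rest else 0)"
    unfolding R_def using adag_product_avoiding_black[OF rest(1) _ T0] rest(2) by simp
  also have "T0 = spin_config (down_spin D) (W - {w, w'}) \<longleftrightarrow> D \<inter> (W - {w, w'}) = D0"
    unfolding T0_def spin_config_down_spin_eq_iff using D0 by auto
  finally have RT: "R T0 = (if D \<inter> (W - {w, w'}) = D0 then sort_sign rest else 0)" .
  have inner: "cann (u, \<sigma>) (ad w' a R) T0 = (if \<sigma> = a then pc w' u else 0) * R T0"
    for \<sigma> a using cann_adag_avoiding_black[OF ww(2) T0] wT(2) by simp
  have eq1: "D = insert w' D0 \<longleftrightarrow> w \<notin> D \<and> w' \<in> D \<and> D \<inter> (W - {w, w'}) = D0"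
    using D D0 ww by auto
  have eq2: "D = insert w D0 \<longleftrightarrow> w \<in> D \<and> w' \<notin> D \<and> D \<inter> (W - {w, w'}) = D0"
    using D D0 ww by auto
  show ?thesis
    unfolding adag_product_Cons R_def[symmetric] double_cann_adag_avoiding_black[OF ww(1) T0 wT(1)]
      inner RT c_def eq1 eq2 down_spin_def by auto
qed

text \<open>Removing both spins at \<open>u\<close> gives zero, as \<open>u\<close> is never doubly occupied. In the
  expansion only the two terms in which \<open>w\<close> and \<open>w'\<close> carry opposite spins survive this,
  with opposite signs.\<close>

lemma amplitude_exchange:
  assumes \<Psi>: "zero_energy_state \<Psi>"
    and ww: "w \<in> W" "w' \<in> W" "w \<noteq> w'"
    and u: "u \<in> AV" "pc w u \<noteq> 0" "pc w' u \<noteq> 0"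
    and D0: "D0 \<subseteq> W - {w, w'}"
  shows "\<Psi> (white_config (insert w' D0)) = \<Psi> (white_config (insert w D0))"
proof -
  define rest where "rest = sorted_list_of_set (W - {w, w'})"
  define \<pi> where "\<pi> = w # w' # rest"
  have rest: "distinct rest" "set rest = W - {w, w'}" unfolding rest_def by auto
  have \<pi>: "distinct \<pi>" "set \<pi> = W" unfolding \<pi>_def using rest ww by auto
  define a where "a D = \<Psi> (white_config D) / sort_sign \<pi>" for D
  define T0 where "T0 = spin_config (down_spin D0) (W - {w, w'})"
  define c where "c = pc w u * pc w' u * sort_sign rest"
  define D1 where "D1 = insert w' D0"
  define D2 where "D2 = insert w D0"
  have D12: "D1 \<noteq> D2" "D1 \<in> Pow W" "D2 \<in> Pow W" unfolding D1_def D2_def using D0 ww by auto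
  have "\<forall>v\<in>AV. \<forall>S. (v, Up) \<in> S \<and> (v, Dn) \<in> S \<longrightarrow> \<Psi> S = 0"
    using \<Psi> unfolding zero_energy_state_def by blast
  then have "\<Psi> (insert (u, Up) (insert (u, Dn) T0)) = 0" using u(1) by blast
  then have "0 = cann (u, Dn) (cann (u, Up) \<Psi>) T0"
    unfolding cann_def by auto
  also have "\<dots> = (\<Sum>D\<in>Pow W. a D * cann (u, Dn) (cann (u, Up) (adag_product (down_spin D) \<pi>)) T0)"
  proof -
    have rep: "\<Psi> = (\<lambda>S. \<Sum>D\<in>Pow W. a D * adag_product (down_spin D) \<pi> S)"
      unfolding a_def by (rule zero_energy_expansion[OF \<Psi> \<pi>])
    have "cann (u, Up) \<Psi> = (\<lambda>S. \<Sum>D\<in>Pow W. a D * cann (u, Up) (adag_product (down_spin D) \<pi>) S)"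
      by (subst rep) (intro ext cann_lin)
    then show ?thesis by (simp only: cann_lin)
  qed
  also have "\<dots> = (\<Sum>D\<in>Pow W. a D * ((if D = D1 then c else 0) - (if D = D2 then c else 0)))"
    using double_cann_adag_product[OF ww rest D0] unfolding \<pi>_def T0_def c_def D1_def D2_def
    by (intro sum.cong) auto
  also have "\<dots> = (\<Sum>D\<in>Pow W. if D = D1 then a D * c else 0) - (\<Sum>D\<in>Pow W. if D = D2 then a D * c else 0)"
    by (simp only: sum_subtractf[symmetric]) (intro sum.cong refl; auto)
  also have "\<dots> = a D1 * c - a D2 * c"
    using D12 by simp
  finally have "a D1 * c = a D2 * c" by simp
  moreover have "c \<noteq> 0" unfolding c_def using u sort_sign_nonzero by simp
  ultimately show ?thesis unfolding a_def D1_def D2_def using sort_sign_nonzero[of \<pi>] by simp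
qed

lemma anticomm_cdag_aop:
  "anticomm (cdag (u, \<sigma>)) (aop L V v0 v \<sigma>) \<Psi> S = pc v u * \<Psi> S"
proof -
  have "anticomm (cdag (u, \<sigma>)) (aop L V v0 v \<sigma>) \<Psi> S
      = (\<Sum>x\<in>rc v. pc v x * (cann (x, \<sigma>) (cdag (u, \<sigma>) \<Psi>) S + cdag (u, \<sigma>) (cann (x, \<sigma>) \<Psi>) S))"
    unfolding anticomm_def aop_def cdag_lin by (simp add: sum.distrib[symmetric] distrib_left add.commute)
  also have "\<dots> = (\<Sum>x\<in>rc v. pc v x * (if x = u then \<Psi> S else 0))"
  proof (intro sum.cong refl)
    fix x show "pc v x * (cann (x, \<sigma>) (cdag (u, \<sigma>) \<Psi>) S + cdag (u, \<sigma>) (cann (x, \<sigma>) \<Psi>) S)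
      = pc v x * (if x = u then \<Psi> S else 0)"
      using cann_cdag_add_cdag_cann[of "(x,\<sigma>)" \<Psi> S]
        cann_cdag_add_cdag_cann_distinct[of "(x,\<sigma>)" "(u,\<sigma>)" \<Psi> S] by auto
  qed
  also have "\<dots> = pc v u * \<Psi> S"
  proof (cases "u \<in> rc v")
    case True
    then have "(\<Sum>x\<in>rc v. pc v x * (if x = u then \<Psi> S else 0)) = (\<Sum>x\<in>{u}. pc v x * \<Psi> S)"
      by (intro sum.mono_neutral_cong_right) auto
    then show ?thesis by simp
  next
    case False
    then show ?thesis using pcoef_not_reach[OF False] by (simp add: sum.neutral)
  qed
  finally show ?thesis .
qed

lemma directly_connected_common_vertex:
  assumes "directly_connected L V v0 \<sigma> v v'"
  shows "\<exists>u\<in>AV. pc v u \<noteq> 0 \<and> pc v' u \<noteq> 0"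
proof -
  have "pc x u \<noteq> 0" if "anticomm (cdag (u, \<sigma>)) (aop L V v0 x \<sigma>) \<noteq> zero_op" for x u
    using that unfolding zero_op_def by (auto simp: fun_eq_iff anticomm_cdag_aop)
  then show ?thesis using assms unfolding directly_connected_def by blast
qed

abbreviation white_connected :: "'v \<Rightarrow> 'v \<Rightarrow> bool" where
  "white_connected x y \<equiv> x \<in> W \<and> y \<in> W \<and> directly_connected L V v0 Up x y"

lemma white_connected_rtranclp_white: "white_connected\<^sup>*\<^sup>* x y \<Longrightarrow> x \<in> W \<Longrightarrow> y \<in> W"
  by (induction rule: rtranclp_induct) auto

lemma amplitude_move_down_spin:
  assumes \<Psi>: "zero_energy_state \<Psi>" and xz: "white_connected x z"
    and D: "D \<subseteq> W" "x \<in> D" "z \<notin> D"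
  shows "\<Psi> (white_config D) = \<Psi> (white_config (insert z (D - {x})))"
proof -
  obtain u where u: "u \<in> AV" "pc x u \<noteq> 0" "pc z u \<noteq> 0"
    using directly_connected_common_vertex xz by blast
  have "x \<noteq> z" "D - {x} \<subseteq> W - {x, z}" using D by auto
  then have "\<Psi> (white_config (insert z (D - {x}))) = \<Psi> (white_config (insert x (D - {x})))"
    using amplitude_exchange[OF \<Psi> _ _ _ u] xz by blast
  then show ?thesis using D(2) by (simp add: insert_absorb)
qed

lemma amplitude_move_down_spin_rtranclp:
  assumes \<Psi>: "zero_energy_state \<Psi>" and xy: "white_connected\<^sup>*\<^sup>* x y"
  shows "D \<subseteq> W \<Longrightarrow> x \<in> D \<Longrightarrow> y \<notin> D \<Longrightarrow> \<Psi> (white_config D) = \<Psi> (white_config (insert y (D - {x})))"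
  using xy
proof (induction arbitrary: D rule: converse_rtranclp_induct)
  case base then show ?case by auto
next
  case (step x z)
  have zW: "z \<in> W" and "x \<in> W" using step.hyps(1) by auto
  consider "z = x" | "z \<noteq> x" "z \<notin> D" | "z \<noteq> x" "z \<in> D" by blast
  then show ?case
  proof cases
    case 1 then show ?thesis using step by simp
  next
    case 2
    define D1 where "D1 = insert z (D - {x})"
    have "\<Psi> (white_config D) = \<Psi> (white_config D1)"
      unfolding D1_def using amplitude_move_down_spin[OF \<Psi> step.hyps(1)] step.prems 2 by blast
    also have "\<dots> = \<Psi> (white_config (insert y (D - {x})))"
    proof (cases "z = y")
      case True then show ?thesis unfolding D1_def by simp
    next
      case False
      then have "\<Psi> (white_config D1) = \<Psi> (white_config (insert y (D1 - {z})))"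
        using step.IH[of D1] step.prems zW unfolding D1_def by auto
      also have "D1 - {z} = D - {x}" unfolding D1_def using 2 by auto
      finally show ?thesis .
    qed
    finally show ?thesis .
  next
    case 3
    define D' where "D' = insert y (D - {z})"
    have "y \<in> W" using white_connected_rtranclp_white[OF step.hyps(2) zW] .
    then have "\<Psi> (white_config D) = \<Psi> (white_config D')"
      unfolding D'_def using step.IH[of D] step.prems 3 by auto
    also have "\<dots> = \<Psi> (white_config (insert z (D' - {x})))"
      using step.prems 3 \<open>y \<in> W\<close> unfolding D'_def
      by (intro amplitude_move_down_spin[OF \<Psi> step.hyps(1)]) auto
    also have "insert z (D' - {x}) = insert y (D - {x})"
      unfolding D'_def using step.prems 3 by auto
    finally show ?thesis .
  qed
qed

lemma amplitude_depends_on_card: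
  assumes \<Psi>: "zero_energy_state \<Psi>" and conn: "\<forall>v\<in>W. \<forall>v'\<in>W. white_connected\<^sup>*\<^sup>* v v'"
  shows "D \<subseteq> W \<Longrightarrow> D' \<subseteq> W \<Longrightarrow> card D = card D' \<Longrightarrow> \<Psi> (white_config D) = \<Psi> (white_config D')"
proof (induction "card (D - D')" arbitrary: D rule: less_induct)
  case less
  have fin: "finite D" "finite D'" using less.prems finite_subset by auto
  show ?case
  proof (cases "D \<subseteq> D'")
    case True
    then have "D = D'" using card_subset_eq[OF fin(2)] less.prems(3) by metis
    then show ?thesis by simp
  next
    case False
    then obtain x where x: "x \<in> D" "x \<notin> D'" by auto
    have "\<not> D' \<subseteq> D"
    proof
      assume "D' \<subseteq> D"
      then have "D' = D" using card_subset_eq[OF fin(1)] less.prems(3) by metis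
      then show False using x by simp
    qed
    then obtain y where y: "y \<in> D'" "y \<notin> D" by auto
    define D1 where "D1 = insert y (D - {x})"
    have "white_connected\<^sup>*\<^sup>* x y" using conn less.prems(1,2) x(1) y(1) by blast
    then have "\<Psi> (white_config D) = \<Psi> (white_config D1)"
      unfolding D1_def using less.prems(1) x(1) y(2) by (rule amplitude_move_down_spin_rtranclp[OF \<Psi>])
    also have "\<dots> = \<Psi> (white_config D')"
    proof (rule less.hyps)
      have "D1 - D' = (D - D') - {x}" unfolding D1_def using x y by auto
      then show "card (D1 - D') < card (D - D')"
        using card_Diff1_less[of "D - D'" x] x fin by simp
      show "D1 \<subseteq> W" "D' \<subseteq> W" unfolding D1_def using less.prems y by auto
      have "card D1 = Suc (card (D - {x}))" unfolding D1_def using y fin by simp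
      also have "\<dots> = card D" using card_Suc_Diff1[of D x] x fin by simp
      finally show "card D1 = card D'" using less.prems(3) by simp
    qed
    finally show ?thesis .
  qed
qed

end

lemma cspan_sum:
  assumes "finite J" "\<forall>j\<in>J. h j \<in> X"
  shows "(\<lambda>S. \<Sum>j\<in>J. c j * h j S) \<in> cspan X"
proof -
  define coef where "coef x = (\<Sum>j\<in>{j\<in>J. h j = x}. c j)" for x
  have "(\<lambda>S. \<Sum>j\<in>J. c j * h j S) = (\<lambda>S. \<Sum>x\<in>h ` J. coef x * x S)"
  proof (rule ext)
    fix S
    have "(\<Sum>j\<in>J. c j * h j S) = (\<Sum>x\<in>h ` J. \<Sum>j\<in>{j\<in>J. h j = x}. c j * h j S)"
      by (rule sum.image_gen) (rule assms(1))
    also have "\<dots> = (\<Sum>x\<in>h ` J. coef x * x S)"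
      unfolding coef_def by (intro sum.cong refl) (simp add: sum_distrib_right)
    finally show "(\<Sum>j\<in>J. c j * h j S) = (\<Sum>x\<in>h ` J. coef x * x S)" .
  qed
  moreover have "finite (h ` J)" "h ` J \<subseteq> X" using assms by auto
  ultimately show ?thesis unfolding cspan_def by blast
qed

lemma sum_Pow_insert:
  assumes "finite A" "a \<notin> A"
  shows "(\<Sum>D\<in>Pow (insert a A). f D) = (\<Sum>D\<in>Pow A. f D) + (\<Sum>D\<in>Pow A. f (insert a D))"
proof -
  have inj: "inj_on (insert a) (Pow A)"
  proof (rule inj_onI)
    fix x y assume "x \<in> Pow A" "y \<in> Pow A" "insert a x = insert a y"
    then show "x = y" using assms(2) by (metis Diff_insert_absorb PowD subsetD)
  qed
  have "(\<Sum>D\<in>Pow (insert a A). f D) = (\<Sum>D\<in>Pow A. f D) + (\<Sum>D\<in>insert a ` Pow A. f D)"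
    unfolding Pow_insert by (rule sum.union_disjoint) (use assms in auto)
  also have "(\<Sum>D\<in>insert a ` Pow A. f D) = (\<Sum>D\<in>Pow A. f (insert a D))"
    by (rule sum.reindex_cong[OF inj]) auto
  finally show ?thesis .
qed

lemma sum_powers_root_of_unity:
  fixes N m :: nat
  assumes N: "N \<ge> 1"
  defines "\<omega> \<equiv> exp (2 * of_real pi * \<i> / of_nat N)"
  shows "(\<Sum>j<N. (\<omega> ^ m) ^ j) = (if N dvd m then of_nat N else 0)"
proof -
  have pow: "\<omega> ^ k = exp (2 * of_real pi * \<i> * of_nat k / of_nat N)" for k
    unfolding \<omega>_def exp_of_nat_mult[symmetric] by (simp add: field_simps)
  show ?thesis
  proof (cases "N dvd m")
    case True
    then have "\<omega> ^ m = 1" unfolding pow using complex_root_unity_eq_1[OF N] by simp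
    then show ?thesis using True by simp
  next
    case False
    then have ne: "\<omega> ^ m \<noteq> 1" unfolding pow using complex_root_unity_eq_1[OF N] by simp
    have "(\<omega> ^ m) ^ N = (\<omega> ^ N) ^ m" by (simp add: power_mult[symmetric] mult.commute)
    also have "\<omega> ^ N = 1" unfolding pow using complex_root_unity_eq_1[OF N, of N] by simp
    finally show ?thesis using geometric_sum[OF ne, of N] False by simp
  qed
qed

lemma dvd_shift_iff:
  fixes N k d :: nat
  assumes "k < N" "d < N"
  shows "N dvd (N - k + d) \<longleftrightarrow> k = d"
proof
  assume dv: "N dvd (N - k + d)"
  show "k = d"
  proof (rule ccontr)
    assume kd: "k \<noteq> d"
    show False
    proof (cases "d < k")
      case True
      then have "0 < N - k + d" "N - k + d < N" using assms by auto
      then show False using dv by (auto dest: nat_dvd_not_less)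
    next
      case False
      then have dk: "k < d" using kd by simp
      then have e: "N - k + d = N + (d - k)" using assms by simp
      then have "N dvd (d - k)" using dv by (simp add: dvd_add_right_iff)
      moreover have "0 < d - k" "d - k < N" using dk assms by auto
      ultimately show False by (auto dest: nat_dvd_not_less)
    qed
  qed
next
  assume "k = d" then show "N dvd (N - k + d)" using assms by simp
qed

text \<open>Discrete Fourier inversion: \<open>|D|\<close> ranges over \<open>0..|A|\<close>, so the \<open>(|A|+1)\<close>-th roots of
  unity separate its values.\<close>

lemma fourier_select_card:
  fixes A :: "'a set" and g :: "nat \<Rightarrow> complex" and F :: "'a set \<Rightarrow> complex"
  assumes "finite A"
  defines "N \<equiv> Suc (card A)"
  defines "\<omega> \<equiv> exp (2 * of_real pi * \<i> / of_nat N)"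
  shows "(\<Sum>j<N. (\<Sum>k\<le>card A. g k * \<omega> ^ (j * (N - k))) * (\<Sum>D\<in>Pow A. (\<omega> ^ j) ^ card D * F D))
    = of_nat N * (\<Sum>D\<in>Pow A. g (card D) * F D)"
proof -
  have card_lt: "card D < N" if "D \<in> Pow A" for D
    using that assms(1) unfolding N_def by (simp add: card_mono le_imp_less_Suc)
  have "(\<Sum>j<N. (\<Sum>k\<le>card A. g k * \<omega> ^ (j * (N - k))) * (\<Sum>D\<in>Pow A. (\<omega> ^ j) ^ card D * F D))
      = (\<Sum>j<N. \<Sum>D\<in>Pow A. \<Sum>k\<le>card A. g k * F D * (\<omega> ^ (N - k + card D)) ^ j)"
    by (simp add: sum_product power_add power_mult_distrib power_mult[symmetric] mult_ac)
  also have "\<dots> = (\<Sum>D\<in>Pow A. \<Sum>j<N. \<Sum>k\<le>card A. g k * F D * (\<omega> ^ (N - k + card D)) ^ j)"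
    by (rule sum.swap)
  also have "\<dots> = (\<Sum>D\<in>Pow A. \<Sum>k\<le>card A. \<Sum>j<N. g k * F D * (\<omega> ^ (N - k + card D)) ^ j)"
    by (intro sum.cong refl sum.swap)
  also have "\<dots> = (\<Sum>D\<in>Pow A. \<Sum>k\<le>card A. g k * F D * (\<Sum>j<N. (\<omega> ^ (N - k + card D)) ^ j))"
    by (simp add: sum_distrib_left)
  also have "\<dots> = (\<Sum>D\<in>Pow A. \<Sum>k\<le>card A. if k = card D then of_nat N * (g k * F D) else 0)"
  proof (intro sum.cong refl)
    fix D k assume "D \<in> Pow A" "k \<in> {..card A}"
    then have "k < N" "card D < N" using card_lt unfolding N_def by auto
    then show "g k * F D * (\<Sum>j<N. (\<omega> ^ (N - k + card D)) ^ j)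
        = (if k = card D then of_nat N * (g k * F D) else 0)"
      using sum_powers_root_of_unity[of N "N - k + card D"] dvd_shift_iff[of k N "card D"]
      unfolding \<omega>_def by simp
  qed
  also have "\<dots> = of_nat N * (\<Sum>D\<in>Pow A. g (card D) * F D)"
    using assms(1) by (simp add: sum_distrib_left card_mono)
  finally show ?thesis .
qed

context hubbard_construction
begin

lemma adag_product_down_spin_Cons_Up:
  "v \<notin> D \<Longrightarrow> adag_product (down_spin D) (v # vs) = ad v Up (adag_product (down_spin D) vs)"
  by (simp add: down_spin_def)

lemma adag_product_down_spin_Cons_Dn:
  assumes "v \<notin> set vs"
  shows "adag_product (down_spin (insert v D)) (v # vs) = ad v Dn (adag_product (down_spin D) vs)"
proof -
  have "adag_product (down_spin (insert v D)) vs = adag_product (down_spin D) vs"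
    using assms by (intro adag_product_cong) (auto simp: down_spin_def)
  then show ?thesis by (simp add: down_spin_def)
qed

lemma adag_rot_product_expand:
  assumes "distinct vs"
  shows "foldr (adag_rot L V v0 \<alpha> \<beta>) vs vacuum
       = (\<lambda>S. \<Sum>D\<in>Pow (set vs). \<alpha> ^ card (set vs - D) * \<beta> ^ card D * adag_product (down_spin D) vs S)"
  using assms
proof (induction vs)
  case Nil
  show ?case by simp
next
  case (Cons v vs)
  let ?A = "set vs"
  have v: "v \<notin> ?A" and fin: "finite ?A" using Cons.prems by auto
  have D: "v \<notin> D" "finite D" if "D \<in> Pow ?A" for D
    using that v finite_subset[OF _ fin] by auto
  have card1: "card (insert v ?A - D) = Suc (card (?A - D))" if "D \<in> Pow ?A" for D
    using D[OF that] v fin by (simp add: insert_Diff_if)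
  have card2: "insert v ?A - insert v D = ?A - D" "card (insert v D) = Suc (card D)"
    if "D \<in> Pow ?A" for D using D[OF that] v by auto
  show ?case
  proof
    fix S
    let ?k = "\<lambda>D. \<alpha> ^ card (?A - D) * \<beta> ^ card D"
    have IH: "foldr (adag_rot L V v0 \<alpha> \<beta>) vs vacuum = (\<lambda>S. \<Sum>D\<in>Pow ?A. ?k D * adag_product (down_spin D) vs S)"
      using Cons by simp
    have "foldr (adag_rot L V v0 \<alpha> \<beta>) (v # vs) vacuum S
        = \<alpha> * ad v Up (\<lambda>S. \<Sum>D\<in>Pow ?A. ?k D * adag_product (down_spin D) vs S) S
        + \<beta> * ad v Dn (\<lambda>S. \<Sum>D\<in>Pow ?A. ?k D * adag_product (down_spin D) vs S) S"
      by (simp add: IH adag_rot_def)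
    also have "\<dots> = (\<Sum>D\<in>Pow ?A. \<alpha> * ?k D * ad v Up (adag_product (down_spin D) vs) S)
        + (\<Sum>D\<in>Pow ?A. \<beta> * ?k D * ad v Dn (adag_product (down_spin D) vs) S)"
      unfolding adag_lin by (simp add: sum_distrib_left mult.assoc)
    also have "\<dots> = (\<Sum>D\<in>Pow (insert v ?A).
        \<alpha> ^ card (insert v ?A - D) * \<beta> ^ card D * adag_product (down_spin D) (v # vs) S)"
      unfolding sum_Pow_insert[OF fin v]
      using D adag_product_down_spin_Cons_Up adag_product_down_spin_Cons_Dn[OF v] card1 card2
      by (intro arg_cong2[where f="(+)"] sum.cong refl) (simp_all add: mult_ac)
    finally show "foldr (adag_rot L V v0 \<alpha> \<beta>) (v # vs) vacuum S
       = (\<Sum>D\<in>Pow (set (v # vs)). \<alpha> ^ card (set (v # vs) - D) * \<beta> ^ card D * adag_product (down_spin D) (v # vs) S)"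
      by simp
  qed
qed

abbreviation "ws \<equiv> sorted_list_of_set W"

lemma Phi_rot_expand:
  "Phi_rot L V v0 \<alpha> \<beta> = (\<lambda>S. \<Sum>D\<in>Pow W. \<alpha> ^ card (W - D) * \<beta> ^ card D * adag_product (down_spin D) ws S)"
  unfolding Phi_rot_def ordered_prod_def using adag_rot_product_expand[of ws \<alpha> \<beta>] by simp

lemma Phi_rot_equal_weights:
  "Phi_rot L V v0 s (z * s) S = s ^ card W * (\<Sum>D\<in>Pow W. z ^ card D * adag_product (down_spin D) ws S)"
proof -
  have "s ^ card (W - D) * (z * s) ^ card D = s ^ card W * z ^ card D" if "D \<in> Pow W" for D
  proof -
    have "card (W - D) + card D = card W" using that by (simp add: card_Diff_subset card_mono)
    then have "s ^ card (W - D) * s ^ card D = s ^ card W" by (simp only: power_add[symmetric])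
    then show ?thesis by (simp add: power_mult_distrib mult_ac)
  qed
  then show ?thesis
    unfolding Phi_rot_expand sum_distrib_left by (intro sum.cong refl) simp
qed

text \<open>The rotations with \<open>\<alpha> = 1/\<surd>2\<close> and \<open>\<beta> = \<omega>\<^sup>j/\<surd>2\<close>, \<open>\<omega>\<close> a primitive \<open>(|W|+1)\<close>-th root of unity,
  weight the term of \<open>D\<close> by \<open>(\<omega>\<^sup>|\<^sup>D\<^sup>|)\<^sup>j\<close>; Fourier inversion then isolates any function of \<open>|D|\<close>.\<close>

lemma card_symmetric_in_span_rotations:
  "(\<lambda>S. \<Sum>D\<in>Pow W. g (card D) * adag_product (down_spin D) ws S) \<in> cspan (spin_rotations L V v0)"
proof -
  define n where "n = card W"
  define N where "N = Suc n"
  define \<omega> where "\<omega> = exp (2 * of_real pi * \<i> / of_nat N)"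
  define s :: complex where "s = of_real (1 / sqrt 2)"
  define R where "R j = Phi_rot L V v0 s (\<omega> ^ j * s)" for j :: nat
  define c where "c j = (\<Sum>k\<le>n. g k * \<omega> ^ (j * (N - k))) / (s ^ n * of_nat N)" for j :: nat
  have "cmod s = 1 / sqrt 2" unfolding s_def norm_of_real by simp
  then have cmod_s: "cmod s ^ 2 = 1 / 2" by (simp add: power_divide)
  have "cmod \<omega> = 1" unfolding \<omega>_def by (simp add: norm_exp_eq_Re)
  then have "cmod s ^ 2 + cmod (\<omega> ^ j * s) ^ 2 = 1" for j
    using cmod_s by (simp add: norm_mult norm_power)
  then have R: "R j \<in> spin_rotations L V v0" for j
    unfolding R_def spin_rotations_def by blast
  have R_expand: "R j S = s ^ n * (\<Sum>D\<in>Pow W. (\<omega> ^ j) ^ card D * adag_product (down_spin D) ws S)" for j S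
    unfolding R_def n_def by (rule Phi_rot_equal_weights)
  have "(\<Sum>j<N. c j * R j S) = (\<Sum>D\<in>Pow W. g (card D) * adag_product (down_spin D) ws S)" for S
  proof -
    have "s ^ n \<noteq> 0" unfolding s_def by simp
    then have "c j * R j S = (\<Sum>k\<le>n. g k * \<omega> ^ (j * (N - k)))
        * (\<Sum>D\<in>Pow W. (\<omega> ^ j) ^ card D * adag_product (down_spin D) ws S) / of_nat N" for j
      unfolding c_def R_expand by (simp add: field_simps)
    then have "(\<Sum>j<N. c j * R j S) = (\<Sum>j<N. (\<Sum>k\<le>n. g k * \<omega> ^ (j * (N - k)))
        * (\<Sum>D\<in>Pow W. (\<omega> ^ j) ^ card D * adag_product (down_spin D) ws S)) / of_nat N"
      by (simp add: sum_divide_distrib)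
    also have "(\<Sum>j<N. (\<Sum>k\<le>n. g k * \<omega> ^ (j * (N - k)))
        * (\<Sum>D\<in>Pow W. (\<omega> ^ j) ^ card D * adag_product (down_spin D) ws S))
        = of_nat N * (\<Sum>D\<in>Pow W. g (card D) * adag_product (down_spin D) ws S)"
      unfolding N_def n_def \<omega>_def by (rule fourier_select_card) simp
    moreover have "of_nat N \<noteq> (0::complex)" unfolding N_def by (simp only: of_nat_eq_0_iff)
    ultimately show ?thesis by simp
  qed
  then have "(\<lambda>S. \<Sum>D\<in>Pow W. g (card D) * adag_product (down_spin D) ws S) = (\<lambda>S. \<Sum>j<N. c j * R j S)"
    by simp
  also have "\<dots> \<in> cspan (spin_rotations L V v0)"
    using R by (intro cspan_sum) auto
  finally show ?thesis .
qed

end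

lemma cspan_mono: "X \<subseteq> Y \<Longrightarrow> \<Psi> \<in> cspan X \<Longrightarrow> \<Psi> \<in> cspan Y"
  unfolding cspan_def by blast

context hubbard_construction
begin

lemma Phi_up_eq: "Phi_up L V v0 = adag_product (\<lambda>_. Up) ws"
  unfolding Phi_up_def ordered_prod_def adag_product_def by simp

lemma Phi_up_support:
  assumes "Phi_up L V v0 S \<noteq> 0"
  shows "S \<subseteq> AV \<times> {Up} \<and> card S = card W"
proof -
  have "S \<subseteq> AV \<times> (\<lambda>_. Up) ` set ws \<and> card S = length ws"
    using adag_product_support[of ws "\<lambda>_. Up" S] assms unfolding Phi_up_eq by simp
  moreover have "(\<lambda>_. Up) ` set ws \<subseteq> {Up}" by auto
  ultimately show ?thesis by auto
qed

lemma Phi_up_in_sector: "Phi_up L V v0 \<in> sector AV (card W)"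
  unfolding sector_def using Phi_up_support by auto

lemma Phi_up_nonzero: "Phi_up L V v0 \<noteq> (\<lambda>S. 0)"
proof
  assume "Phi_up L V v0 = (\<lambda>S. 0)"
  moreover have "avoids black (spin_config (\<lambda>_. Up) W)"
    unfolding avoids_def spin_config_def using white_not_black by auto
  then have "Phi_up L V v0 (spin_config (\<lambda>_. Up) W) = sort_sign ws"
    unfolding Phi_up_eq using adag_product_avoiding_black[of ws] by simp
  ultimately show False using sort_sign_nonzero[of ws] by simp
qed

lemma H_hub_Phi_up: "H_hub L V t U (Phi_up L V v0) = (\<lambda>S. of_real 0 * Phi_up L V v0 S)"
proof
  fix S
  have "bop V l \<sigma> (Phi_up L V v0) = (\<lambda>S. 0)" if "l \<in> {1..L}" for l \<sigma>
    unfolding Phi_up_eq using bop_adag_product[of ws l] that by simp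
  then have "(\<Sum>l\<in>{1..L}. \<Sum>\<sigma>\<in>{Up, Dn}. bdag V l \<sigma> (bop V l \<sigma> (Phi_up L V v0)) S) = 0"
    by (simp add: bdag_def cdag_zero)
  moreover have "numop (v, Up) (numop (v, Dn) (Phi_up L V v0)) S = 0" for v
  proof -
    have "(v, Up) \<in> S \<and> (v, Dn) \<in> S \<Longrightarrow> Phi_up L V v0 S = 0" using Phi_up_support by auto
    then show ?thesis unfolding numop_apply by auto
  qed
  ultimately show "H_hub L V t U (Phi_up L V v0) S = of_real 0 * Phi_up L V v0 S"
    unfolding H_hub_def H_hop_def by simp
qed

lemma ground_energy_zero:
  assumes "t > 0" "U > 0"
  shows "is_ground_energy (H_hub L V t U) (sector AV (card W)) 0"
  unfolding is_ground_energy_def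
  using Phi_up_in_sector Phi_up_nonzero H_hub_Phi_up H_hub_eigenvalue_nonneg[OF assms] by blast

lemma ground_state_zero_energy:
  assumes "t > 0" "U > 0" "\<Psi> \<in> ground_states (H_hub L V t U) (sector AV (card W)) 0"
  shows "zero_energy_state \<Psi>"
proof -
  have "\<Psi> \<in> sector AV (card W)" and eig: "H_hub L V t U \<Psi> = (\<lambda>S. of_real 0 * \<Psi> S)"
    using assms(3) unfolding ground_states_def by auto
  moreover have "finite AV" by simp
  ultimately show ?thesis
    using H_hub_zero_energy[OF assms(1,2) eig] hopping_form_eq_0_iff double_occupancy_eq_0_iff
    unfolding zero_energy_state_def by blast
qed

lemma zero_energy_state_in_span_rotations:
  assumes \<Psi>: "zero_energy_state \<Psi>" and conn: "\<forall>v\<in>W. \<forall>v'\<in>W. white_connected\<^sup>*\<^sup>* v v'"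
  shows "\<Psi> \<in> cspan (spin_rotations L V v0)"
proof -
  define a where "a D = \<Psi> (white_config D) / sort_sign ws" for D
  define g where "g k = a (SOME D. D \<subseteq> W \<and> card D = k)" for k
  have "g (card D) = a D" if "D \<subseteq> W" for D
  proof -
    have "\<exists>D'. D' \<subseteq> W \<and> card D' = card D" using that by blast
    then have "(SOME D'. D' \<subseteq> W \<and> card D' = card D) \<subseteq> W \<and> card (SOME D'. D' \<subseteq> W \<and> card D' = card D) = card D"
      by (rule someI_ex)
    then show ?thesis
      unfolding g_def a_def using amplitude_depends_on_card[OF \<Psi> conn _ that] by simp
  qed
  then have "\<Psi> = (\<lambda>S. \<Sum>D\<in>Pow W. g (card D) * adag_product (down_spin D) ws S)"
    using zero_energy_expansion[OF \<Psi>] unfolding a_def by simp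
  then show ?thesis using card_symmetric_in_span_rotations[of g] by simp
qed

end

theorem mainTheorem7:
  fixes L :: nat and V :: "nat \<Rightarrow> ('v::{finite,linorder}) set" and v0 :: "nat \<Rightarrow> 'v"
    and t U :: real
  assumes constr: "valid_construction L V v0"
    and conn: "\<forall>\<sigma>. family_connected L V v0 \<sigma> (whiteV L V v0)"
    and t_pos: "t > 0" and U_pos: "U > 0"
  shows "is_ground_energy (H_hub L V t U) (sector (allV L V) (card (whiteV L V v0))) 0
     \<and> (\<forall>\<Psi>\<in>ground_states (H_hub L V t U) (sector (allV L V) (card (whiteV L V v0))) 0.
           \<Psi> \<in> cspan ({Phi_up L V v0} \<union> spin_rotations L V v0))"
proof -
  interpret hubbard_construction L V v0 by (rule hubbard_construction.intro) (rule constr)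
  have white_conn: "\<forall>v\<in>W. \<forall>v'\<in>W. white_connected\<^sup>*\<^sup>* v v'"
    using conn unfolding family_connected_def by blast
  have "\<Psi> \<in> cspan ({Phi_up L V v0} \<union> spin_rotations L V v0)"
    if "\<Psi> \<in> ground_states (H_hub L V t U) (sector AV (card W)) 0" for \<Psi>
    using zero_energy_state_in_span_rotations[OF ground_state_zero_energy[OF t_pos U_pos that] white_conn]
    by (rule cspan_mono[rotated]) blast
  with ground_energy_zero[OF t_pos U_pos] show ?thesis by blast
qed

end
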